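(* Let $p=3$, let $n_1,n_2\ge1$, $s\ge0$ and $n=n_1+2n_2+s$, and let $f:\mathbb{F}_3^{n}=\mathbb{F}_3^{n_1}\times\mathbb{F}_3^{n_2}\times\mathbb{F}_3^{n_2}\times\mathbb{F}_3^{s}\to\mathbb{F}_3$ be the function $f(x,y,z,r)=f^{(z)}(x)+\sum_{i=1}^{n_2}y_iz_i$, where $f^{(0)}(x)=\sum_{i=1}^{n_1}u_ix_i^2$ and $f^{(z)}(x)=\sum_{i=1}^{n_1}v_ix_i^2$ for $z\ne0$, with $u_i,v_i\in\mathbb{F}_3^*$; let $\epsilon_0$ be the type of $f$. Let $\alpha_i=e_i$ for $1\le i\le n_1$ and $\alpha_i=e_1+e_i$ for $n_1<i\le n$, let $H^{(1)}=(\alpha_i\cdot\alpha_j)_{1\le i,j\le n}$, let $T$ be a subset of $D_{f,0}\setminus\{0\}$ such that every element of $D_{f,0}\setminus\{0\}$ is uniquely $ax$ with $a\in\mathbb{F}_3^*$, $x\in T$, and let $G$ be the $n\times\#T$ matrix whose $i$-th row is $(\alpha_i\cdot x)_{x\in T}$, and $G'=[H^{(1)},G]$. If $n+s$ is even with $0\le s\le n-4$ and $n+s\ge6$, then $G'$ generates a ternary $[\frac{3^{n-1}+2\epsilon_0\cdot3^{\frac{n+s}{2}-1}-1}{2}+n,\,n]$ LCD code $\mathcal{C}$, and $\mathcal{C}^\perp$ is a ternary $[\frac{3^{n-1}+2\epsilon_0\cdot3^{\frac{n+s}{2}-1}-1}{2}+n,\,\frac{3^{n-1}+2\epsilon_0\cdot3^{\frac{n+s}{2}-1}-1}{2},\,3]$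 LCD code. If $n+s$ is odd with $0\le s\le n-3$ and $n+s\ge5$, then $G'$ generates a ternary $[\frac{3^{n-1}-1}{2}+n,\,n]$ LCD code $\mathcal{C}$, and $\mathcal{C}^\perp$ is a ternary $[\frac{3^{n-1}-1}{2}+n,\,\frac{3^{n-1}-1}{2},\,3]$ LCD code.
   Context: $\mathbb{F}_3^n$ carries the dot product $a\cdot b=\sum a_ib_i$, and $e_i$ is the $i$-th standard basis vector (coordinates ordered as $x,y,z,r$). $D_{f,0}=\{w:f(w)=0\}$. Walsh transform: $\widehat{\chi_f}(\alpha)=\sum_{w}\xi_3^{f(w)-\alpha\cdot w}$ with $\xi_3=e^{2\pi\sqrt{-1}/3}$; the function $f$ above is $s$-plateaued, i.e. $|\widehat{\chi_f}(\alpha)|\in\{0,3^{(n+s)/2}\}$, and $\widehat{\chi_f}(0)=\epsilon_0\mu 3^{(n+s)/2}\xi_3^{c}$ for some $c\in\mathbb{F}_3$, with $\epsilon_0\in\{\pm1\}$ (the type of $f$), where $\mu=1$ if $3^{n+s}\equiv1\pmod4$ and $\mu=\sqrt{-1}$ otherwise. A linear code is LCD if $\mathcal{C}\cap\mathcal{C}^\perp=\{0\}$ (dual w.r.t. the dot product); $[N,K,d]$ = length, dimension, minimum distance. *)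

theory Defs
  imports Complex_Main
begin

text \<open>The field F_3 is represented by the integers 0, 1, 2 with
arithmetic taken mod 3. A vector of F_3^n is a function nat => int whose
values at 0..n-1 lie in {0,1,2} and which vanishes from n on. Coordinates
are 0-indexed: x = w 0 .. w (n1-1), y = w n1 .. w (n1+n2-1),
z = w (n1+n2) .. w (n1+2 n2-1), r = the remaining s coordinates.\<close>

definition F3vec :: "nat \<Rightarrow> (nat \<Rightarrow> int) set" where
  "F3vec n = {v. \<forall>k. (k < n \<longrightarrow> v k \<in> {0,1,2}) \<and> (n \<le> k \<longrightarrow> v k = 0)}"

definition dot3 :: "nat \<Rightarrow> (nat \<Rightarrow> int) \<Rightarrow> (nat \<Rightarrow> int) \<Rightarrow> int" where
  "dot3 n a b = (\<Sum>k<n. a k * b k) mod 3"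

definition vscale3 :: "int \<Rightarrow> (nat \<Rightarrow> int) \<Rightarrow> (nat \<Rightarrow> int)" where
  "vscale3 a x = (\<lambda>k. (a * x k) mod 3)"

definition unitvec :: "nat \<Rightarrow> (nat \<Rightarrow> int)" where
  "unitvec i = (\<lambda>k. if k = i then 1 else 0)"

definition fF :: "nat \<Rightarrow> nat \<Rightarrow> (nat \<Rightarrow> int) \<Rightarrow> (nat \<Rightarrow> int) \<Rightarrow> (nat \<Rightarrow> int) \<Rightarrow> int" where
  "fF n1 n2 u v w =
     ((if (\<forall>i<n2. w (n1 + n2 + i) = 0)
       then (\<Sum>i<n1. u i * (w i)^2)
       else (\<Sum>i<n1. v i * (w i)^2))
      + (\<Sum>i<n2. w (n1 + i) * w (n1 + n2 + i))) mod 3"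

definition xi3 :: complex where
  "xi3 = cis (2 * pi / 3)"

definition walsh :: "nat \<Rightarrow> ((nat \<Rightarrow> int) \<Rightarrow> int) \<Rightarrow> (nat \<Rightarrow> int) \<Rightarrow> complex" where
  "walsh n f \<alpha> = (\<Sum>w\<in>F3vec n. xi3 ^ nat ((f w - dot3 n \<alpha> w) mod 3))"

definition mu3 :: "nat \<Rightarrow> complex" where
  "mu3 m = (if (3::nat) ^ m mod 4 = 1 then 1 else \<i>)"

definition is_type :: "nat \<Rightarrow> nat \<Rightarrow> ((nat \<Rightarrow> int) \<Rightarrow> int) \<Rightarrow> int \<Rightarrow> bool" where
  "is_type n s f eps0 \<longleftrightarrow> eps0 \<in> {1, -1} \<and>
     (\<exists>c\<in>{0,1,2::nat}. walsh n f (\<lambda>_. 0) =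
        of_int eps0 * mu3 (n + s) * complex_of_real (3 powr (real (n + s) / 2)) * xi3 ^ c)"

definition Dzero :: "nat \<Rightarrow> ((nat \<Rightarrow> int) \<Rightarrow> int) \<Rightarrow> (nat \<Rightarrow> int) set" where
  "Dzero n f = {w \<in> F3vec n. f w = 0}"

definition alphavec :: "nat \<Rightarrow> nat \<Rightarrow> (nat \<Rightarrow> int)" where
  "alphavec n1 i = (if i < n1 then unitvec i else (\<lambda>k. unitvec 0 k + unitvec i k))"

text \<open>The matrix G' = [H^(1), G]; rows indexed by i < n, columns by
  Inl j (j < n, the H^(1) part) and Inr x (x in T, the G part).\<close>
definition Gprime :: "nat \<Rightarrow> nat \<Rightarrow> nat \<Rightarrow> (nat + (nat \<Rightarrow> int)) \<Rightarrow> int" where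
  "Gprime n1 n i c = (case c of
      Inl j \<Rightarrow> dot3 n (alphavec n1 i) (alphavec n1 j)
    | Inr x \<Rightarrow> dot3 n (alphavec n1 i) x)"

definition colset :: "nat \<Rightarrow> (nat \<Rightarrow> int) set \<Rightarrow> (nat + (nat \<Rightarrow> int)) set" where
  "colset n T = Inl ` {..<n} \<union> Inr ` T"

definition words3 :: "'j set \<Rightarrow> ('j \<Rightarrow> int) set" where
  "words3 J = {w. (\<forall>j\<in>J. w j \<in> {0,1,2}) \<and> (\<forall>j. j \<notin> J \<longrightarrow> w j = 0)}"

definition gen_code :: "nat \<Rightarrow> 'j set \<Rightarrow> (nat \<Rightarrow> 'j \<Rightarrow> int) \<Rightarrow> ('j \<Rightarrow> int) set" where
  "gen_code k J M = {(\<lambda>j. if j \<in> J then (\<Sum>i<k. c i * M i j) mod 3 else 0) | c. c \<in> F3vec k}"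

definition dual_code :: "'j set \<Rightarrow> ('j \<Rightarrow> int) set \<Rightarrow> ('j \<Rightarrow> int) set" where
  "dual_code J C = {w \<in> words3 J. \<forall>c\<in>C. (\<Sum>j\<in>J. w j * c j) mod 3 = 0}"

definition is_LCD :: "'j set \<Rightarrow> ('j \<Rightarrow> int) set \<Rightarrow> bool" where
  "is_LCD J C \<longleftrightarrow> C \<inter> dual_code J C = {(\<lambda>_. 0)}"

definition wt :: "'j set \<Rightarrow> ('j \<Rightarrow> int) \<Rightarrow> nat" where
  "wt J w = card {j \<in> J. w j \<noteq> 0}"

definition code_NK :: "'j set \<Rightarrow> ('j \<Rightarrow> int) set \<Rightarrow> int \<Rightarrow> int \<Rightarrow> bool" where
  "code_NK J C N K \<longleftrightarrow> finite J \<and> int (card J) = N \<and> K \<ge> 0 \<and> card C = 3 ^ nat K"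

definition min_dist :: "'j set \<Rightarrow> ('j \<Rightarrow> int) set \<Rightarrow> nat \<Rightarrow> bool" where
  "min_dist J C d \<longleftrightarrow> (\<exists>c\<in>C. c \<noteq> (\<lambda>_. 0) \<and> wt J c = d) \<and>
     (\<forall>c\<in>C. c \<noteq> (\<lambda>_. 0) \<longrightarrow> d \<le> wt J c)"

end

(*
  Counting zeros: in the Walsh coefficient of f at 0 the vectors with z <> 0 cancel (adding z_j to
  y_j, for the first j with z_j <> 0, adds 1 to f), while those with z = 0 contribute
  3^(n2+s) prod_i (1 + 2 xi^(u_i)), a product of n1 purely imaginary numbers.  Hence
  #D_{f,0} = 3^(n-1) when n1 is odd; for n1 even the Walsh coefficient is real and its sign is
  the type eps0.

  The code: G' = A [A^T, X], where A, the matrix with rows alpha_i, is invertible over F_3 and X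
  has the columns x in T.  Modulo 3 the indicator of f = 0 is the low-degree polynomial 1 - f^2,
  so Chevalley-Warning gives sum_(w in D_{f,0}) w_k w_l = 0, hence X X^T = 0 and
  G' G'^T = (A A^T)^2 is nonsingular: C has dimension n, F_3^N = C + C^perp, and C and C^perp
  are LCD.  C^perp consists of the linear relations among the columns alpha_j and x in T; none of
  these vanishes and no two are proportional (f(alpha_j) <> 0, and T has one point on each line
  of D_{f,0}), while 2 alpha_0 + alpha_n1 + 2a t = 0 where e_n1 = a t with t in T.
*)
theory Submission
  imports Defs "HOL-Library.FuncSet" "HOL-Number_Theory.Cong"
begin

section \<open>Coordinate subspaces of F_3^m\<close>

definition coord_range :: "nat set \<Rightarrow> nat \<Rightarrow> int set" where
  "coord_range Z i = (if i \<in> Z then {0} else {0, 1, 2})"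

definition coord_subspace :: "nat \<Rightarrow> nat set \<Rightarrow> (nat \<Rightarrow> int) set" where
  "coord_subspace m Z = {w. (\<forall>i<m. w i \<in> coord_range Z i) \<and> (\<forall>i\<ge>m. w i = 0)}"

lemma F3vec_eq_coord_subspace: "F3vec n = coord_subspace n {}"
  unfolding F3vec_def coord_subspace_def coord_range_def by auto

lemma bij_betw_restrict_coord_subspace:
  "bij_betw (\<lambda>w. restrict w {..<m}) (coord_subspace m Z) (PiE {..<m} (coord_range Z))"
  by (rule bij_betw_byWitness[where f' = "\<lambda>g i. if i < m then g i else 0"])
     (auto simp: coord_subspace_def fun_eq_iff PiE_def extensional_def)

lemma finite_coord_subspace: "finite (coord_subspace m Z)"
  using bij_betw_finite[OF bij_betw_restrict_coord_subspace]
  by (simp add: finite_PiE coord_range_def)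

lemma card_coord_subspace: "card (coord_subspace m Z) = (\<Prod>i<m. card (coord_range Z i))"
  using bij_betw_same_card[OF bij_betw_restrict_coord_subspace] by (simp add: card_PiE)

lemma sum_prod_coord_subspace:
  fixes h :: "nat \<Rightarrow> int \<Rightarrow> 'b::comm_semiring_1"
  shows "(\<Sum>w\<in>coord_subspace m Z. \<Prod>i<m. h i (w i)) = (\<Prod>i<m. \<Sum>a\<in>coord_range Z i. h i a)"
proof -
  have "(\<Sum>w\<in>coord_subspace m Z. \<Prod>i<m. h i (w i))
      = (\<Sum>g\<in>PiE {..<m} (coord_range Z). \<Prod>i<m. h i (g i))"
    by (simp add: sum.reindex_bij_betw[OF bij_betw_restrict_coord_subspace, symmetric])
  also have "\<dots> = (\<Prod>i<m. \<Sum>a\<in>coord_range Z i. h i a)"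
    by (rule prod_sum_PiE[symmetric]) (auto simp: coord_range_def)
  finally show ?thesis .
qed

lemma finite_F3vec: "finite (F3vec n)"
  by (simp add: F3vec_eq_coord_subspace finite_coord_subspace)

lemma card_F3vec: "card (F3vec n) = 3 ^ n"
  by (simp add: F3vec_eq_coord_subspace card_coord_subspace coord_range_def numeral_3_eq_3)

lemma F3vec_vals: "w \<in> F3vec n \<Longrightarrow> w k \<in> {0, 1, 2}"
  unfolding F3vec_def by (cases "k < n") auto

lemma F3vec_eqI:
  assumes "x \<in> F3vec n" "y \<in> F3vec n" "\<And>k. k < n \<Longrightarrow> [x k = y k] (mod 3)"
  shows "x = y"
proof
  fix k
  show "x k = y k"
  proof (cases "k < n")
    case True
    then have "[x k = y k] (mod 3)" by (rule assms(3))
    then show ?thesis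
      using F3vec_vals[OF assms(1), of k] F3vec_vals[OF assms(2), of k] by (auto simp: cong_def)
  next
    case False
    then show ?thesis using assms(1,2) by (simp add: F3vec_def)
  qed
qed

section \<open>Sums of polynomial functions over F_3\<close>

definition monomial_sum :: "(int \<times> nat list) list \<Rightarrow> (nat \<Rightarrow> int) \<Rightarrow> int" where
  "monomial_sum ms w = (\<Sum>(c, ks)\<leftarrow>ms. c * prod_list (map w ks))"

definition poly_fun :: "nat \<Rightarrow> nat \<Rightarrow> ((nat \<Rightarrow> int) \<Rightarrow> int) \<Rightarrow> bool" where
  "poly_fun m d g \<longleftrightarrow>
     (\<exists>ms. (\<forall>(c, ks)\<in>set ms. set ks \<subseteq> {..<m} \<and> length ks \<le> d) \<and> g = monomial_sum ms)"

lemma monomial_sum_append: "monomial_sum (ms @ ms') w = monomial_sum ms w + monomial_sum ms' w"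
  by (simp add: monomial_sum_def)

lemma monomial_sum_scale:
  "c * prod_list (map w ks) * monomial_sum ms w =
     monomial_sum (map (\<lambda>(c', ks'). (c * c', ks @ ks')) ms) w"
  by (induction ms) (auto simp: monomial_sum_def algebra_simps)

lemma monomial_sum_mult:
  "monomial_sum ms w * monomial_sum ms' w =
     monomial_sum (concat (map (\<lambda>(c, ks). map (\<lambda>(c', ks'). (c * c', ks @ ks')) ms') ms)) w"
proof (induction ms)
  case (Cons cks ms)
  then show ?case
    by (cases cks) (simp add: monomial_sum_append flip: monomial_sum_scale,
        simp add: monomial_sum_def algebra_simps)
qed (simp add: monomial_sum_def)

lemma poly_fun_monomial:
  "set ks \<subseteq> {..<m} \<Longrightarrow> length ks \<le> d \<Longrightarrow> poly_fun m d (\<lambda>w. c * prod_list (map w ks))"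
  unfolding poly_fun_def monomial_sum_def by (intro exI[of _ "[(c, ks)]"]) auto

lemma poly_fun_const: "poly_fun m d (\<lambda>_. c)"
  using poly_fun_monomial[of "[]"] by simp

lemma poly_fun_add:
  assumes "poly_fun m d g" "poly_fun m d h"
  shows "poly_fun m d (\<lambda>w. g w + h w)"
proof -
  obtain ms ms' where ms: "\<forall>(c, ks)\<in>set ms. set ks \<subseteq> {..<m} \<and> length ks \<le> d" "g = monomial_sum ms"
    and ms': "\<forall>(c, ks)\<in>set ms'. set ks \<subseteq> {..<m} \<and> length ks \<le> d" "h = monomial_sum ms'"
    using assms unfolding poly_fun_def by blast
  show ?thesis
    unfolding poly_fun_def
  proof (intro exI conjI)
    show "\<forall>(c, ks)\<in>set (ms @ ms'). set ks \<subseteq> {..<m} \<and> length ks \<le> d"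
      using ms(1) ms'(1) by auto
    show "(\<lambda>w. g w + h w) = monomial_sum (ms @ ms')"
      by (simp add: fun_eq_iff ms(2) ms'(2) monomial_sum_append)
  qed
qed

lemma poly_fun_mult:
  assumes "poly_fun m d g" "poly_fun m e h"
  shows "poly_fun m (d + e) (\<lambda>w. g w * h w)"
proof -
  obtain ms ms' where ms: "\<forall>(c, ks)\<in>set ms. set ks \<subseteq> {..<m} \<and> length ks \<le> d" "g = monomial_sum ms"
    and ms': "\<forall>(c, ks)\<in>set ms'. set ks \<subseteq> {..<m} \<and> length ks \<le> e" "h = monomial_sum ms'"
    using assms unfolding poly_fun_def by blast
  let ?ms = "concat (map (\<lambda>(c, ks). map (\<lambda>(c', ks'). (c * c', ks @ ks')) ms') ms)"
  show ?thesis
    unfolding poly_fun_def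
  proof (intro exI conjI)
    show "\<forall>(c, ks)\<in>set ?ms. set ks \<subseteq> {..<m} \<and> length ks \<le> d + e"
      using ms(1) ms'(1) by (force intro: add_mono)
    show "(\<lambda>w. g w * h w) = monomial_sum ?ms"
      by (simp add: fun_eq_iff ms(2) ms'(2) monomial_sum_mult)
  qed
qed

lemma poly_fun_diff:
  assumes "poly_fun m d g" "poly_fun m d h"
  shows "poly_fun m d (\<lambda>w. g w - h w)"
proof -
  have "poly_fun m d (\<lambda>w. - 1 * h w)"
    using poly_fun_mult[OF poly_fun_const[of m 0 "- 1"] assms(2)] by simp
  from poly_fun_add[OF assms(1) this] show ?thesis by simp
qed

lemma poly_fun_sum:
  assumes "finite A" "\<And>a. a \<in> A \<Longrightarrow> poly_fun m d (g a)"
  shows "poly_fun m d (\<lambda>w. \<Sum>a\<in>A. g a w)"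
  using assms
proof (induction A rule: finite_induct)
  case empty
  then show ?case using poly_fun_const[of m d 0] by simp
next
  case (insert a A)
  then show ?case using poly_fun_add[of m d "g a" "\<lambda>w. \<Sum>a\<in>A. g a w"] by simp
qed

lemma prod_list_map_eq_prod_power:
  fixes w :: "nat \<Rightarrow> 'b::comm_monoid_mult"
  assumes "set ks \<subseteq> {..<m}"
  shows "prod_list (map w ks) = (\<Prod>i<m. w i ^ count_list ks i)"
  using assms
proof (induction ks)
  case (Cons k ks)
  have "(\<Prod>i<m. w i ^ count_list (k # ks) i)
      = (\<Prod>i<m. (if i = k then w k else 1) * w i ^ count_list ks i)"
    by (intro prod.cong) auto
  also have "\<dots> = w k * (\<Prod>i<m. w i ^ count_list ks i)"
    using Cons.prems by (simp add: prod.distrib)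
  finally show ?case using Cons by simp
qed simp

lemma sum_F3_power_dvd3: "e \<le> 1 \<Longrightarrow> (3::int) dvd (\<Sum>a\<in>{0, 1, 2}. a ^ e)"
  by (cases e) auto

text \<open>A monomial of degree below twice the number of free coordinates has a free variable with
  exponent at most 1, and summing over that variable gives 0 modulo 3.\<close>

lemma sum_monomial_coord_subspace_dvd3:
  assumes Z: "Z \<subseteq> {..<m}" and ks: "set ks \<subseteq> {..<m}" and len: "length ks < 2 * (m - card Z)"
  shows "(3::int) dvd (\<Sum>w\<in>coord_subspace m Z. prod_list (map w ks))"
proof -
  obtain i where i: "i < m" "i \<notin> Z" and e: "count_list ks i \<le> 1"
  proof (rule ccontr)
    assume "\<not> thesis"
    then have ge2: "\<And>i. i \<in> {..<m} - Z \<Longrightarrow> 2 \<le> count_list ks i" using that by force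
    have "2 * card ({..<m} - Z) = (\<Sum>i\<in>{..<m} - Z. 2)" by simp
    also have "\<dots> \<le> (\<Sum>i\<in>{..<m} - Z. count_list ks i)" by (rule sum_mono) (rule ge2)
    also have "\<dots> \<le> (\<Sum>i<m. count_list ks i)" by (rule sum_mono2) auto
    also have "\<dots> = length ks" using ks by (simp add: sum_count_set)
    finally show False using len Z by (simp add: card_Diff_subset finite_subset)
  qed
  have "(3::int) dvd (\<Sum>a\<in>coord_range Z i. a ^ count_list ks i)"
    using i e by (simp add: coord_range_def sum_F3_power_dvd3 del: insert_iff)
  also have "\<dots> dvd (\<Prod>i<m. \<Sum>a\<in>coord_range Z i. a ^ count_list ks i)"
    using i by (intro dvd_prodI) auto
  also have "\<dots> = (\<Sum>w\<in>coord_subspace m Z. prod_list (map w ks))"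
    using sum_prod_coord_subspace[of "\<lambda>i a. a ^ count_list ks i"]
    by (simp add: prod_list_map_eq_prod_power[OF ks])
  finally show ?thesis .
qed

lemma sum_poly_fun_coord_subspace_dvd3:
  assumes Z: "Z \<subseteq> {..<m}" and g: "poly_fun m d g" and d: "d < 2 * (m - card Z)"
  shows "(3::int) dvd (\<Sum>w\<in>coord_subspace m Z. g w)"
proof -
  obtain ms where ms: "\<forall>(c, ks)\<in>set ms. set ks \<subseteq> {..<m} \<and> length ks \<le> d" and "g = monomial_sum ms"
    using g unfolding poly_fun_def by blast
  have "(3::int) dvd (\<Sum>w\<in>coord_subspace m Z. monomial_sum ms w)"
    using ms
  proof (induction ms)
    case (Cons cks ms)
    obtain c ks where "cks = (c, ks)" by fastforce
    with Cons have "(3::int) dvd c * (\<Sum>w\<in>coord_subspace m Z. prod_list (map w ks))"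
      using sum_monomial_coord_subspace_dvd3[OF Z, of ks] d by auto
    with Cons \<open>cks = (c, ks)\<close> show ?case
      by (simp add: monomial_sum_def sum.distrib sum_distrib_left)
  qed (simp add: monomial_sum_def)
  then show ?thesis using \<open>g = monomial_sum ms\<close> by simp
qed

section \<open>The zero set of f\<close>

definition diag_form :: "nat \<Rightarrow> (nat \<Rightarrow> int) \<Rightarrow> (nat \<Rightarrow> int) \<Rightarrow> int" where
  "diag_form n1 c w = (\<Sum>i<n1. c i * (w i)\<^sup>2)"

definition yz_form :: "nat \<Rightarrow> nat \<Rightarrow> (nat \<Rightarrow> int) \<Rightarrow> int" where
  "yz_form n1 n2 w = (\<Sum>i<n2. w (n1 + i) * w (n1 + n2 + i))"

definition z_zero :: "nat \<Rightarrow> nat \<Rightarrow> (nat \<Rightarrow> int) \<Rightarrow> bool" where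
  "z_zero n1 n2 w \<longleftrightarrow> (\<forall>i<n2. w (n1 + n2 + i) = 0)"

definition f_int :: "nat \<Rightarrow> nat \<Rightarrow> (nat \<Rightarrow> int) \<Rightarrow> (nat \<Rightarrow> int) \<Rightarrow> (nat \<Rightarrow> int) \<Rightarrow> int" where
  "f_int n1 n2 u v w =
     (if z_zero n1 n2 w then diag_form n1 u w else diag_form n1 v w) + yz_form n1 n2 w"

lemma fF_eq_f_int_mod: "fF n1 n2 u v w = f_int n1 n2 u v w mod 3"
  unfolding fF_def f_int_def diag_form_def yz_form_def z_zero_def by simp

lemma yz_form_z_zero: "z_zero n1 n2 w \<Longrightarrow> yz_form n1 n2 w = 0"
  unfolding yz_form_def z_zero_def by simp

lemma z_zero_F3vec_eq_coord_subspace: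
  assumes "n1 + 2 * n2 \<le> n"
  shows "{w \<in> F3vec n. z_zero n1 n2 w} = coord_subspace n {n1 + n2..<n1 + 2 * n2}"
proof -
  have "z_zero n1 n2 w \<longleftrightarrow> (\<forall>i\<in>{n1 + n2..<n1 + 2 * n2}. w i = 0)" for w
    unfolding z_zero_def
    by (metis (no_types, opaque_lifting) add.assoc atLeastLessThan_iff le_add1 le_Suc_ex mult_2
        nat_add_left_cancel_less)
  then show ?thesis
    using assms unfolding F3vec_eq_coord_subspace coord_subspace_def coord_range_def by auto
qed

lemma poly_fun_diag_form:
  assumes "n1 \<le> n"
  shows "poly_fun n 2 (diag_form n1 c)"
proof -
  have "diag_form n1 c = (\<lambda>w. \<Sum>i<n1. c i * prod_list (map w [i, i]))"
    by (simp add: fun_eq_iff diag_form_def power2_eq_square mult.assoc)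
  then show ?thesis
    by (simp only:) (intro poly_fun_sum poly_fun_monomial; use assms in auto)
qed

lemma poly_fun_yz_form:
  assumes "n1 + 2 * n2 \<le> n"
  shows "poly_fun n 2 (yz_form n1 n2)"
proof -
  have "yz_form n1 n2 = (\<lambda>w. \<Sum>i<n2. 1 * prod_list (map w [n1 + i, n1 + n2 + i]))"
    by (simp add: fun_eq_iff yz_form_def)
  then show ?thesis
    by (simp only:) (intro poly_fun_sum poly_fun_monomial; use assms in auto)
qed

lemma cong_zero_indicator_mod3:
  fixes P :: int
  shows "[(if [P = 0] (mod 3) then 1 else 0) = 1 - P\<^sup>2] (mod 3)"
proof -
  have "[1 - P\<^sup>2 = 1 - (P mod 3)\<^sup>2] (mod 3)"
    by (intro cong_diff cong_refl cong_pow) (simp add: cong_def)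
  moreover have "P mod 3 = 0 \<or> P mod 3 = 1 \<or> P mod 3 = 2" by auto
  ultimately show ?thesis by (auto simp: cong_def)
qed

lemma poly_fun_coord_product: "k < n \<Longrightarrow> l < n \<Longrightarrow> poly_fun n 2 (\<lambda>w. w k * w l)"
  using poly_fun_monomial[of "[k, l]" n 2 1] by simp

lemma sum_Dzero_cong:
  "[(\<Sum>w\<in>Dzero n (fF n1 n2 u v). g w) = (\<Sum>w\<in>F3vec n. (1 - (f_int n1 n2 u v w)\<^sup>2) * g w)] (mod 3)"
proof -
  have "(\<Sum>w\<in>Dzero n (fF n1 n2 u v). g w)
      = (\<Sum>w\<in>F3vec n. (if [f_int n1 n2 u v w = 0] (mod 3) then 1 else 0) * g w)"
    unfolding Dzero_def fF_eq_f_int_mod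
    by (simp add: sum.inter_filter[OF finite_F3vec] cong_def) (intro sum.cong; simp)
  also have "[\<dots> = (\<Sum>w\<in>F3vec n. (1 - (f_int n1 n2 u v w)\<^sup>2) * g w)] (mod 3)"
    by (intro cong_sum cong_mult cong_zero_indicator_mod3 cong_refl)
  finally show ?thesis .
qed

text \<open>On z = 0 the two branches of f differ in the diagonal form only.  If n1 = 1 the subspace
  z = 0 may be too small for the degree argument, but then u_0^2 = v_0^2 = 1 modulo 3.\<close>

lemma sum_z_zero_diag_form_diff_dvd3:
  assumes n: "n = n1 + 2 * n2 + s" and free: "4 \<le> n1 + n2 + s \<or> n1 = 1"
    and u: "\<forall>i<n1. u i \<in> {1, 2}" and v: "\<forall>i<n1. v i \<in> {1, 2}" and g: "poly_fun n 2 g"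
  shows "3 dvd (\<Sum>w\<in>coord_subspace n {n1 + n2..<n1 + 2 * n2}.
                  ((diag_form n1 u w)\<^sup>2 - (diag_form n1 v w)\<^sup>2) * g w)"
  using free
proof
  assume "4 \<le> n1 + n2 + s"
  have "poly_fun n 6 (\<lambda>w. ((diag_form n1 u w)\<^sup>2 - (diag_form n1 v w)\<^sup>2) * g w)"
    unfolding power2_eq_square using n
    by (intro poly_fun_mult[of _ 4 _ 2, simplified] poly_fun_diff g
        poly_fun_mult[of _ 2 _ 2, simplified] poly_fun_diag_form) auto
  then show ?thesis
    by (rule sum_poly_fun_coord_subspace_dvd3[rotated]) (use n \<open>4 \<le> n1 + n2 + s\<close> in auto)
next
  assume "n1 = 1"
  have "(3::int) dvd (u 0)\<^sup>2 - (v 0)\<^sup>2"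
    using u v \<open>n1 = 1\<close> by auto
  show ?thesis
  proof (rule dvd_sum)
    fix w
    have eq: "((diag_form n1 u w)\<^sup>2 - (diag_form n1 v w)\<^sup>2) * g w
        = ((u 0)\<^sup>2 - (v 0)\<^sup>2) * ((w 0)\<^sup>2 * (w 0)\<^sup>2 * g w)"
      using \<open>n1 = 1\<close> by (simp add: diag_form_def algebra_simps power_mult_distrib)
    show "3 dvd ((diag_form n1 u w)\<^sup>2 - (diag_form n1 v w)\<^sup>2) * g w"
      unfolding eq by (rule dvd_mult2) fact
  qed
qed

text \<open>Chevalley--Warning: modulo 3 the indicator of f = 0 is 1 - f^2, a polynomial of degree 4
  up to a correction supported on the subspace z = 0.\<close>

lemma sum_Dzero_coord_product_dvd3:
  assumes n: "n = n1 + 2 * n2 + s" and n4: "4 \<le> n" and free: "4 \<le> n1 + n2 + s \<or> n1 = 1"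
    and kl: "k < n" "l < n" and u: "\<forall>i<n1. u i \<in> {1, 2}" and v: "\<forall>i<n1. v i \<in> {1, 2}"
  shows "(3::int) dvd (\<Sum>w\<in>Dzero n (fF n1 n2 u v). w k * w l)"
proof -
  define g where "g w = w k * w l" for w :: "nat \<Rightarrow> int"
  define Q where "Q w = diag_form n1 v w + yz_form n1 n2 w" for w
  define R where "R w = ((diag_form n1 u w)\<^sup>2 - (diag_form n1 v w)\<^sup>2) * g w" for w
  have g: "poly_fun n 2 g" unfolding g_def using kl by (rule poly_fun_coord_product)
  have "poly_fun n 6 (\<lambda>w. (1 - (Q w)\<^sup>2) * g w)"
    unfolding power2_eq_square Q_def using n
    by (intro poly_fun_mult[of _ 4 _ 2, simplified] poly_fun_diff g poly_fun_const
        poly_fun_mult[of _ 2 _ 2, simplified] poly_fun_add poly_fun_diag_form poly_fun_yz_form) auto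
  then have "3 dvd (\<Sum>w\<in>F3vec n. (1 - (Q w)\<^sup>2) * g w)"
    unfolding F3vec_eq_coord_subspace
    by (rule sum_poly_fun_coord_subspace_dvd3[rotated]) (use n4 in auto)
  moreover have "3 dvd (\<Sum>w\<in>coord_subspace n {n1 + n2..<n1 + 2 * n2}. R w)"
    unfolding R_def by (rule sum_z_zero_diag_form_diff_dvd3[OF n free u v g])
  moreover have "(1 - (f_int n1 n2 u v w)\<^sup>2) * g w
      = (1 - (Q w)\<^sup>2) * g w - (if z_zero n1 n2 w then R w else 0)" for w
    by (cases "z_zero n1 n2 w") (simp_all add: f_int_def Q_def R_def yz_form_z_zero algebra_simps)
  then have "(\<Sum>w\<in>F3vec n. (1 - (f_int n1 n2 u v w)\<^sup>2) * g w)
      = (\<Sum>w\<in>F3vec n. (1 - (Q w)\<^sup>2) * g w) - (\<Sum>w\<in>coord_subspace n {n1 + n2..<n1 + 2 * n2}. R w)"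
    using z_zero_F3vec_eq_coord_subspace[of n1 n2 n] n
    by (simp add: sum_subtractf sum.inter_filter[OF finite_F3vec, symmetric])
  ultimately show ?thesis
    using cong_dvd_iff[OF sum_Dzero_cong[where n = n and g = g]] by (simp add: g_def)
qed

section \<open>The Walsh coefficient at zero and the number of zeros of f\<close>

definition e3 :: "int \<Rightarrow> complex" where
  "e3 k = xi3 ^ nat (k mod 3)"

lemma e3_eq_cis: "e3 k = cis (2 * pi * of_int k / 3)"
proof -
  have "e3 k = cis (2 * pi * of_int (k mod 3) / 3)"
    by (simp add: e3_def xi3_def DeMoivre mult.commute)
  also have "\<dots> = cis (2 * pi * of_int (k div 3)) * cis (2 * pi * of_int (k mod 3) / 3)"
    by simp
  also have "\<dots> = cis (2 * pi * of_int k / 3)"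
  proof -
    have "real_of_int k = 3 * of_int (k div 3) + of_int (k mod 3)"
      by (metis div_mult_mod_eq mult.commute of_int_add of_int_mult of_int_numeral)
    then show ?thesis by (simp add: cis_mult field_simps)
  qed
  finally show ?thesis .
qed

lemma e3_add: "e3 (a + b) = e3 a * e3 b"
  by (simp add: e3_eq_cis cis_mult add_divide_distrib distrib_left)

lemma e3_sum: "finite A \<Longrightarrow> e3 (\<Sum>i\<in>A. g i) = (\<Prod>i\<in>A. e3 (g i))"
  by (induction A rule: finite_induct) (simp_all add: e3_add, simp add: e3_def)

lemma e3_cong: "[a = b] (mod 3) \<Longrightarrow> e3 a = e3 b"
  by (simp add: e3_def cong_def)

lemma e3_mod: "e3 (k mod 3) = e3 k"
  by (simp add: e3_def)

lemma e3_1: "e3 1 = xi3"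
  by (simp add: e3_def)

lemma xi3_eq: "xi3 = Complex (- 1 / 2) (sqrt 3 / 2)"
  unfolding xi3_def by (simp add: complex_eq_iff cos_120 sin_120)

lemma e3_eq_if: "e3 k = (if [k = 0] (mod 3) then 1 else if [k = 1] (mod 3) then xi3 else xi3\<^sup>2)"
proof -
  have "k mod 3 = 0 \<or> k mod 3 = 1 \<or> k mod 3 = 2" by auto
  then show ?thesis by (auto simp: e3_def cong_def)
qed

lemma Re_e3: "Re (e3 k) = (if [k = 0] (mod 3) then 1 else - 1 / 2)"
  by (simp add: e3_eq_if xi3_eq power2_eq_square)

lemma Re_one_plus_two_e3: "a \<in> {1, 2} \<Longrightarrow> Re (1 + 2 * e3 a) = 0"
  by (auto simp: Re_e3 cong_def)

lemma walsh_zero: "walsh n f (\<lambda>_. 0) = (\<Sum>w\<in>F3vec n. e3 (f w))"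
  unfolding walsh_def dot3_def e3_def by simp

lemma Re_walsh_zero:
  "2 * Re (walsh n (fF n1 n2 u v) (\<lambda>_. 0)) = 3 * real (card (Dzero n (fF n1 n2 u v))) - 3 ^ n"
proof -
  let ?f = "fF n1 n2 u v"
  have fmod: "?f w mod 3 = ?f w" for w unfolding fF_def by simp
  have "Re (walsh n ?f (\<lambda>_. 0)) = (\<Sum>w\<in>F3vec n. 3 / 2 * (if ?f w = 0 then 1 else 0) - 1 / 2)"
    unfolding walsh_zero by (auto simp: Re_e3 cong_def fmod intro!: sum.cong)
  also have "\<dots> = 3 / 2 * (\<Sum>w\<in>F3vec n. if ?f w = 0 then 1 else 0) - 1 / 2 * 3 ^ n"
    by (simp add: sum_subtractf sum_distrib_left card_F3vec)
  also have "(\<Sum>w\<in>F3vec n. if ?f w = 0 then 1 else 0) = real (card (Dzero n ?f))"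
    by (simp add: Dzero_def sum.inter_filter[OF finite_F3vec, symmetric])
  finally show ?thesis by simp
qed

definition first_nonzero_z :: "nat \<Rightarrow> nat \<Rightarrow> (nat \<Rightarrow> int) \<Rightarrow> nat" where
  "first_nonzero_z n1 n2 w = (LEAST j. j < n2 \<and> w (n1 + n2 + j) \<noteq> 0)"

definition y_shift :: "nat \<Rightarrow> nat \<Rightarrow> int \<Rightarrow> (nat \<Rightarrow> int) \<Rightarrow> (nat \<Rightarrow> int)" where
  "y_shift n1 n2 t w =
     (let j = first_nonzero_z n1 n2 w in w(n1 + j := (w (n1 + j) + t * w (n1 + n2 + j)) mod 3))"

lemma first_nonzero_z_correct:
  assumes "\<not> z_zero n1 n2 w"
  shows "first_nonzero_z n1 n2 w < n2" "w (n1 + n2 + first_nonzero_z n1 n2 w) \<noteq> 0"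
proof -
  from assms obtain j where "j < n2 \<and> w (n1 + n2 + j) \<noteq> 0" unfolding z_zero_def by auto
  then have "first_nonzero_z n1 n2 w < n2 \<and> w (n1 + n2 + first_nonzero_z n1 n2 w) \<noteq> 0"
    unfolding first_nonzero_z_def by (rule LeastI)
  then show "first_nonzero_z n1 n2 w < n2" "w (n1 + n2 + first_nonzero_z n1 n2 w) \<noteq> 0"
    by auto
qed

lemma first_nonzero_z_upd:
  "p < n1 + n2 \<Longrightarrow> first_nonzero_z n1 n2 (w(p := a)) = first_nonzero_z n1 n2 w"
  unfolding first_nonzero_z_def by (rule arg_cong[where f = Least]) auto

lemma z_zero_upd: "p < n1 + n2 \<Longrightarrow> z_zero n1 n2 (w(p := a)) = z_zero n1 n2 w"
  unfolding z_zero_def by auto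

lemma diag_form_upd: "n1 \<le> p \<Longrightarrow> diag_form n1 c (w(p := a)) = diag_form n1 c w"
  unfolding diag_form_def by (intro sum.cong) auto

lemma yz_form_upd:
  assumes "j < n2"
  shows "yz_form n1 n2 (w(n1 + j := a)) = yz_form n1 n2 w + (a - w (n1 + j)) * w (n1 + n2 + j)"
proof -
  have "yz_form n1 n2 (w(n1 + j := a))
      = (\<Sum>i<n2. w (n1 + i) * w (n1 + n2 + i)
          + (if i = j then (a - w (n1 + j)) * w (n1 + n2 + j) else 0))"
    unfolding yz_form_def using assms by (intro sum.cong) (auto simp: algebra_simps)
  then show ?thesis
    using assms by (simp add: sum.distrib yz_form_def)
qed

context
  fixes n1 n2 n :: nat and u v :: "nat \<Rightarrow> int"
  assumes n: "n1 + 2 * n2 \<le> n"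
begin

abbreviation z_nonzero_vecs :: "(nat \<Rightarrow> int) set" where
  "z_nonzero_vecs \<equiv> {w \<in> F3vec n. \<not> z_zero n1 n2 w}"

lemma y_shift_mem:
  assumes "w \<in> z_nonzero_vecs"
  shows "y_shift n1 n2 t w \<in> F3vec n" "\<not> z_zero n1 n2 (y_shift n1 n2 t w)"
    and "first_nonzero_z n1 n2 (y_shift n1 n2 t w) = first_nonzero_z n1 n2 w"
  using assms first_nonzero_z_correct[of n1 n2 w] n
  by (auto simp: y_shift_def Let_def F3vec_def z_zero_upd first_nonzero_z_upd)

lemma y_shift_inverse:
  assumes "w \<in> z_nonzero_vecs"
  shows "y_shift n1 n2 (- t) (y_shift n1 n2 t w) = w"
proof -
  let ?j = "first_nonzero_z n1 n2 w"
  have "w (n1 + ?j) \<in> {0, 1, 2}"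
    using assms n first_nonzero_z_correct(1)[of n1 n2 w] by (auto simp: F3vec_def)
  then have "((w (n1 + ?j) + t * w (n1 + n2 + ?j)) mod 3 - t * w (n1 + n2 + ?j)) mod 3
      = w (n1 + ?j)"
    by (auto simp: mod_diff_left_eq)
  then show ?thesis
    using y_shift_mem(3)[OF assms, of t] first_nonzero_z_correct(1)[of n1 n2 w] assms
    by (simp add: y_shift_def Let_def fun_eq_iff)
qed

lemma f_int_y_shift:
  assumes "w \<in> z_nonzero_vecs"
  shows "[f_int n1 n2 u v (y_shift n1 n2 1 w) = f_int n1 n2 u v w + 1] (mod 3)"
proof -
  let ?j = "first_nonzero_z n1 n2 w"
  let ?y = "w (n1 + ?j)" and ?z = "w (n1 + n2 + ?j)"
  have j: "?j < n2" "?z \<noteq> 0" using first_nonzero_z_correct[of n1 n2 w] assms by auto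
  then have "?z \<in> {1, 2}" using assms n by (auto simp: F3vec_def)
  have "[((?y + ?z) mod 3 - ?y) * ?z = ?z * ?z] (mod 3)"
    by (intro cong_mult cong_refl) (simp add: cong_def mod_diff_left_eq)
  also have "[?z * ?z = 1] (mod 3)"
    using \<open>?z \<in> {1, 2}\<close> by (auto simp: cong_def)
  finally have "[((?y + ?z) mod 3 - ?y) * ?z = 1] (mod 3)" .
  moreover have "f_int n1 n2 u v (y_shift n1 n2 1 w)
      = f_int n1 n2 u v w + ((?y + ?z) mod 3 - ?y) * ?z"
    using assms y_shift_mem(2,3)[OF assms, of 1] j(1)
    by (simp add: f_int_def y_shift_def Let_def diag_form_upd yz_form_upd)
  ultimately show ?thesis
    by (simp add: cong_add_lcancel)
qed

text \<open>y_shift permutes the vectors with z \<noteq> 0 and adds 1 to f, so their contribution to the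
  Walsh sum is invariant under multiplication by xi3 \<noteq> 1.\<close>

lemma sum_e3_f_int_z_nonzero: "(\<Sum>w\<in>z_nonzero_vecs. e3 (f_int n1 n2 u v w)) = 0"
proof -
  let ?S = "\<Sum>w\<in>z_nonzero_vecs. e3 (f_int n1 n2 u v w)"
  have "?S = (\<Sum>w\<in>z_nonzero_vecs. e3 (f_int n1 n2 u v (y_shift n1 n2 1 w)))"
    by (rule sum.reindex_bij_witness[where i = "y_shift n1 n2 1" and j = "y_shift n1 n2 (- 1)"])
       (auto simp: y_shift_mem y_shift_inverse[of _ "- 1", simplified] y_shift_inverse)
  also have "\<dots> = (\<Sum>w\<in>z_nonzero_vecs. e3 (f_int n1 n2 u v w) * xi3)"
    by (intro sum.cong refl) (simp add: e3_cong[OF f_int_y_shift] e3_add e3_1)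
  also have "\<dots> = ?S * xi3"
    by (simp add: sum_distrib_right)
  finally have "?S * xi3 = ?S" ..
  then have "?S * (1 - xi3) = 0"
    by (simp add: right_diff_distrib)
  moreover have "xi3 \<noteq> 1" by (simp add: xi3_eq complex_eq_iff)
  ultimately show ?thesis by simp
qed

end

lemma sum_e3_f_int_z_zero:
  assumes n: "n = n1 + 2 * n2 + s"
  shows "(\<Sum>w\<in>{w \<in> F3vec n. z_zero n1 n2 w}. e3 (f_int n1 n2 u v w))
       = (\<Prod>i<n1. 1 + 2 * e3 (u i)) * 3 ^ (n2 + s)"
proof -
  define Zz where "Zz = {n1 + n2..<n1 + 2 * n2}"
  define h where "h i a = (if i < n1 then e3 (u i * a\<^sup>2) else 1)" for i a
  have "e3 (f_int n1 n2 u v w) = (\<Prod>i<n. h i (w i))" if "z_zero n1 n2 w" for w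
  proof -
    have "e3 (f_int n1 n2 u v w) = (\<Prod>i<n1. e3 (u i * (w i)\<^sup>2))"
      using that by (simp add: f_int_def yz_form_z_zero diag_form_def e3_sum)
    also have "\<dots> = (\<Prod>i<n. h i (w i))"
      using n by (intro prod.mono_neutral_cong_left) (auto simp: h_def)
    finally show ?thesis .
  qed
  then have "(\<Sum>w\<in>{w \<in> F3vec n. z_zero n1 n2 w}. e3 (f_int n1 n2 u v w))
      = (\<Sum>w\<in>coord_subspace n Zz. \<Prod>i<n. h i (w i))"
    using z_zero_F3vec_eq_coord_subspace[of n1 n2 n] n
    by (intro sum.cong) (auto simp: Zz_def)
  also have "\<dots> = (\<Prod>i<n. \<Sum>a\<in>coord_range Zz i. h i a)"
    by (rule sum_prod_coord_subspace)
  also have "\<dots> = (\<Prod>i<n1. \<Sum>a\<in>coord_range Zz i. h i a) * (\<Prod>i\<in>{n1..<n}. \<Sum>a\<in>coord_range Zz i. h i a)"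
    using n prod.atLeastLessThan_concat[of 0 n1 n, symmetric] by (simp add: lessThan_atLeast0)
  also have "(\<Prod>i<n1. \<Sum>a\<in>coord_range Zz i. h i a) = (\<Prod>i<n1. 1 + 2 * e3 (u i))"
  proof (intro prod.cong refl)
    fix i assume "i \<in> {..<n1}"
    have "e3 (u i * 4) = e3 (u i)" by (intro e3_cong) (simp add: cong_def, presburger)
    then show "(\<Sum>a\<in>coord_range Zz i. h i a) = 1 + 2 * e3 (u i)"
      using \<open>i \<in> {..<n1}\<close> by (simp add: coord_range_def Zz_def h_def e3_def)
  qed
  also have "(\<Prod>i\<in>{n1..<n}. \<Sum>a\<in>coord_range Zz i. h i a) = (\<Prod>i\<in>{n1..<n}. if i \<in> Zz then 1 else 3)"
    by (intro prod.cong refl) (simp add: coord_range_def h_def)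
  also have "\<dots> = 3 ^ card ({n1..<n} - Zz)"
    by (simp add: prod.If_cases Diff_eq)
  also have "card ({n1..<n} - Zz) = n2 + s"
    using n by (simp add: Zz_def card_Diff_subset)
  finally show ?thesis by simp
qed

lemma prod_imaginary_parity:
  fixes g :: "nat \<Rightarrow> complex"
  assumes "\<And>i. i < m \<Longrightarrow> Re (g i) = 0"
  shows "(even m \<longrightarrow> Im (\<Prod>i<m. g i) = 0) \<and> (odd m \<longrightarrow> Re (\<Prod>i<m. g i) = 0)"
  using assms by (induction m) (auto simp: lessThan_Suc)

lemma walsh_zero_fF:
  assumes n: "n = n1 + 2 * n2 + s"
  shows "walsh n (fF n1 n2 u v) (\<lambda>_. 0) = (\<Prod>i<n1. 1 + 2 * e3 (u i)) * 3 ^ (n2 + s)"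
proof -
  have "walsh n (fF n1 n2 u v) (\<lambda>_. 0) = (\<Sum>w\<in>F3vec n. e3 (f_int n1 n2 u v w))"
    by (simp add: walsh_zero fF_eq_f_int_mod e3_mod)
  also have "\<dots> = (\<Sum>w\<in>{w \<in> F3vec n. z_zero n1 n2 w}. e3 (f_int n1 n2 u v w))
      + (\<Sum>w\<in>{w \<in> F3vec n. \<not> z_zero n1 n2 w}. e3 (f_int n1 n2 u v w))"
    by (simp add: sum.inter_filter[OF finite_F3vec] flip: sum.distrib) (intro sum.cong; simp)
  also have "(\<Sum>w\<in>{w \<in> F3vec n. \<not> z_zero n1 n2 w}. e3 (f_int n1 n2 u v w)) = 0"
    using n by (intro sum_e3_f_int_z_nonzero) simp
  finally show ?thesis using sum_e3_f_int_z_zero[OF n] by simp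
qed

lemma walsh_zero_fF_parity:
  assumes n: "n = n1 + 2 * n2 + s" and u: "\<forall>i<n1. u i \<in> {1, 2}"
  shows "(even n1 \<longrightarrow> Im (walsh n (fF n1 n2 u v) (\<lambda>_. 0)) = 0)
       \<and> (odd n1 \<longrightarrow> Re (walsh n (fF n1 n2 u v) (\<lambda>_. 0)) = 0)"
proof -
  have "\<And>i. i < n1 \<Longrightarrow> Re (1 + 2 * e3 (u i)) = 0"
    using u Re_one_plus_two_e3 by blast
  from prod_imaginary_parity[OF this] show ?thesis
    by (simp add: walsh_zero_fF[OF n])
qed

lemma card_Dzero_odd:
  assumes n: "n = n1 + 2 * n2 + s" and u: "\<forall>i<n1. u i \<in> {1, 2}" and odd: "odd n1"
  shows "card (Dzero n (fF n1 n2 u v)) = 3 ^ (n - 1)"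
proof -
  have "3 * real (card (Dzero n (fF n1 n2 u v))) = 3 ^ n"
    using Re_walsh_zero[of n n1 n2 u v] walsh_zero_fF_parity[OF n u] odd by simp
  then have "3 * card (Dzero n (fF n1 n2 u v)) = 3 ^ n"
    by (metis of_nat_eq_of_nat_power_cancel_iff of_nat_mult of_nat_numeral)
  moreover have "n = Suc (n - 1)" using odd n by (cases n1) auto
  ultimately show ?thesis by (metis mult_left_cancel power_Suc zero_neq_numeral)
qed

lemma mu3_even: "even m \<Longrightarrow> mu3 m = 1"
  by (auto simp: mu3_def power_mult power_mod[of 9, symmetric] elim!: evenE)

lemma card_Dzero_even:
  assumes n: "n = n1 + 2 * n2 + s" and u: "\<forall>i<n1. u i \<in> {1, 2}" and ev: "even n1"
    and type: "is_type n s (fF n1 n2 u v) eps0"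
  shows "3 * int (card (Dzero n (fF n1 n2 u v))) = 3 ^ n + 2 * eps0 * 3 ^ ((n + s) div 2)"
proof -
  let ?W = "walsh n (fF n1 n2 u v) (\<lambda>_. 0)"
  let ?h = "(n + s) div 2"
  have evs: "even (n + s)" using n ev by simp
  from type obtain c where eps0: "eps0 \<in> {1, -1}" and c: "c \<in> {0, 1, 2::nat}"
    and W: "?W = of_int eps0 * mu3 (n + s) * complex_of_real (3 powr (real (n + s) / 2)) * xi3 ^ c"
    unfolding is_type_def by blast
  have "real (n + s) / 2 = real ?h"
    using evs by (simp add: real_of_nat_div)
  then have "(3::real) powr (real (n + s) / 2) = 3 ^ ?h"
    by (simp add: powr_realpow)
  then have W': "?W = complex_of_real (of_int eps0 * 3 ^ ?h) * xi3 ^ c"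
    using W mu3_even[OF evs] by simp
  have "Im ?W = 0"
    using walsh_zero_fF_parity[OF n u] ev by blast
  then have "Im (xi3 ^ c) = 0"
    using eps0 unfolding W' by auto
  then have "c = 0"
    using c by (auto simp: xi3_eq power2_eq_square)
  then have "Re ?W = of_int eps0 * 3 ^ ?h" unfolding W' by simp
  then have "real_of_int (3 * int (card (Dzero n (fF n1 n2 u v))))
      = real_of_int (3 ^ n + 2 * eps0 * 3 ^ ?h)"
    using Re_walsh_zero[of n n1 n2 u v] by simp
  then show ?thesis by (simp only: of_int_eq_iff)
qed

section \<open>Projective representatives\<close>

lemma vscale3_F3vec: "w \<in> F3vec n \<Longrightarrow> vscale3 a w \<in> F3vec n"
  unfolding F3vec_def vscale3_def by auto

lemma vscale3_1: "w \<in> F3vec n \<Longrightarrow> vscale3 1 w = w"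
proof
  fix k
  assume "w \<in> F3vec n"
  then show "vscale3 1 w k = w k" using F3vec_vals[of w n k] by (auto simp: vscale3_def)
qed

lemma vscale3_vscale3: "a \<in> {1, 2} \<Longrightarrow> w \<in> F3vec n \<Longrightarrow> vscale3 a (vscale3 a w) = w"
proof
  fix k
  assume "a \<in> {1, 2}" "w \<in> F3vec n"
  then show "vscale3 a (vscale3 a w) k = w k" using F3vec_vals[of w n k] by (auto simp: vscale3_def)
qed

lemma vscale3_eq_zero_iff:
  "a \<in> {1, 2} \<Longrightarrow> w \<in> F3vec n \<Longrightarrow> vscale3 a w = (\<lambda>_. 0) \<longleftrightarrow> w = (\<lambda>_. 0)"
  by (metis (no_types) vscale3_vscale3 vscale3_def mult_zero_right mod_0)

lemma F3vec_eq_vscale3I: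
  assumes "x \<in> F3vec n" "y \<in> F3vec n" "\<And>k. k < n \<Longrightarrow> [x k = a * y k] (mod 3)"
  shows "x = vscale3 a y"
  using assms by (intro F3vec_eqI vscale3_F3vec) (auto simp: vscale3_def cong_def)

lemma vscale3_nonzeroD: "vscale3 a y k \<noteq> 0 \<Longrightarrow> y k \<noteq> 0"
  by (auto simp: vscale3_def)

lemma cong_vscale3_mult:
  "a \<in> {1, 2} \<Longrightarrow> [(a * x) mod 3 * ((a * y) mod 3) = x * y] (mod 3)"
  for a x y :: int
proof -
  assume "a \<in> {1, 2}"
  then have "[a * a = 1] (mod 3)" by (auto simp: cong_def)
  then have "[(a * a) * (x * y) = 1 * (x * y)] (mod 3)" by (rule cong_mult) simp
  then show ?thesis by (simp add: cong_def mod_mult_eq algebra_simps)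
qed

lemma fF_vscale3:
  assumes w: "w \<in> F3vec n" and a: "a \<in> {1, 2}"
  shows "fF n1 n2 u v (vscale3 a w) = fF n1 n2 u v w"
proof -
  let ?w' = "vscale3 a w"
  have "?w' k = 0 \<longleftrightarrow> w k = 0" for k
    using a F3vec_vals[OF w, of k] by (auto simp: vscale3_def)
  then have "z_zero n1 n2 ?w' = z_zero n1 n2 w"
    by (simp add: z_zero_def)
  moreover have "[diag_form n1 c ?w' = diag_form n1 c w] (mod 3)" for c
    unfolding diag_form_def power2_eq_square
    by (intro cong_sum cong_scalar_left) (simp add: vscale3_def cong_vscale3_mult[OF a])
  moreover have "[yz_form n1 n2 ?w' = yz_form n1 n2 w] (mod 3)"
    unfolding yz_form_def by (intro cong_sum) (simp add: vscale3_def cong_vscale3_mult[OF a])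
  ultimately have "[f_int n1 n2 u v ?w' = f_int n1 n2 u v w] (mod 3)"
    unfolding f_int_def by (simp add: cong_add)
  then show ?thesis by (simp add: fF_eq_f_int_mod cong_def)
qed

locale proj_reps =
  fixes n :: nat and D T :: "(nat \<Rightarrow> int) set"
  assumes cone_sub: "D \<subseteq> F3vec n"
    and cone_zero: "(\<lambda>_. 0) \<in> D"
    and cone_scale: "\<And>a w. a \<in> {1, 2} \<Longrightarrow> w \<in> D \<Longrightarrow> vscale3 a w \<in> D"
    and reps_sub: "T \<subseteq> D - {\<lambda>_. 0}"
    and reps_unique: "\<forall>w \<in> D - {\<lambda>_. 0}.
                        \<exists>!p. fst p \<in> {1, 2} \<and> snd p \<in> T \<and> w = vscale3 (fst p) (snd p)"
begin

lemma reps_F3vec: "x \<in> T \<Longrightarrow> x \<in> F3vec n"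
  using reps_sub cone_sub by auto

lemma finite_cone: "finite D"
  using cone_sub finite_F3vec by (rule finite_subset)

lemma finite_reps: "finite T"
  using reps_sub finite_cone by (auto intro: finite_subset)

lemma reps_exists:
  assumes "w \<in> D" "w \<noteq> (\<lambda>_. 0)"
  obtains a t where "a \<in> {1, 2}" "t \<in> T" "w = vscale3 a t"
proof -
  obtain p where "fst p \<in> {1, 2} \<and> snd p \<in> T \<and> w = vscale3 (fst p) (snd p)"
    using reps_unique assms by (blast dest: ex1_implies_ex)
  then show thesis using that[of "fst p" "snd p"] by blast
qed

lemma reps_unique_pair:
  assumes "w \<in> D" "w \<noteq> (\<lambda>_. 0)"
    and "a \<in> {1, 2}" "t \<in> T" "w = vscale3 a t"
    and "a' \<in> {1, 2}" "t' \<in> T" "w = vscale3 a' t'"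
  shows "a = a'" "t = t'"
proof -
  have "Uniq (\<lambda>p. fst p \<in> {1, 2} \<and> snd p \<in> T \<and> w = vscale3 (fst p) (snd p))"
    using reps_unique assms(1,2) unfolding ex1_iff_ex_Uniq by blast
  then have "(a, t) = (a', t')"
    by (rule Uniq_D) (use assms(3-8) in simp_all)
  then show "a = a'" "t = t'" by simp_all
qed

lemma reps_eq_if_proportional:
  assumes x: "x \<in> T" and y: "y \<in> T" and a: "a \<in> {1, 2}" and xy: "x = vscale3 a y"
  shows "x = y"
proof -
  have "x \<in> D" "x \<noteq> (\<lambda>_. 0)" using x reps_sub by auto
  moreover have "x = vscale3 1 x" using vscale3_1[OF reps_F3vec[OF x]] by simp
  ultimately show ?thesis using reps_unique_pair(2)[of x 1 x a y] x y a xy by simp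
qed

lemma bij_betw_scale_reps:
  "bij_betw (\<lambda>p. vscale3 (fst p) (snd p)) ({1, 2} \<times> T) (D - {\<lambda>_. 0})"
proof (rule bij_betw_imageI)
  have scale_mem: "vscale3 a t \<in> D" "vscale3 a t \<noteq> (\<lambda>_. 0)" if "a \<in> {1, 2}" "t \<in> T" for a t
    using that reps_sub cone_scale vscale3_eq_zero_iff[OF that(1) reps_F3vec[OF that(2)]] by auto
  show "inj_on (\<lambda>p. vscale3 (fst p) (snd p)) ({1, 2} \<times> T)"
  proof (rule inj_onI)
    fix p q assume "p \<in> {1, 2} \<times> T" "q \<in> {1, 2} \<times> T"
      and "vscale3 (fst p) (snd p) = vscale3 (fst q) (snd q)"
    then show "p = q"
      using reps_unique_pair[OF scale_mem, of "fst p" "snd p" "fst p" "snd p" "fst q" "snd q"]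
      by (auto simp: prod_eq_iff)
  qed
  show "(\<lambda>p. vscale3 (fst p) (snd p)) ` ({1, 2} \<times> T) = D - {\<lambda>_. 0}"
  proof
    show "(\<lambda>p. vscale3 (fst p) (snd p)) ` ({1, 2} \<times> T) \<subseteq> D - {\<lambda>_. 0}"
      using scale_mem by auto
    show "D - {\<lambda>_. 0} \<subseteq> (\<lambda>p. vscale3 (fst p) (snd p)) ` ({1, 2} \<times> T)"
    proof
      fix w assume "w \<in> D - {\<lambda>_. 0}"
      then have "w \<in> D" "w \<noteq> (\<lambda>_. 0)" by auto
      then obtain a t where "a \<in> {1, 2}" "t \<in> T" "w = vscale3 a t"
        by (rule reps_exists)
      then show "w \<in> (\<lambda>p. vscale3 (fst p) (snd p)) ` ({1, 2} \<times> T)"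
        by (intro image_eqI[of _ _ "(a, t)"]) auto
    qed
  qed
qed

lemma card_cone: "card D = 2 * card T + 1"
proof -
  have "card (D - {\<lambda>_. 0}) = card ({1::int, 2} \<times> T)"
    using bij_betw_same_card[OF bij_betw_scale_reps] by simp
  then have "card D - 1 = 2 * card T"
    using cone_zero finite_cone by (simp add: card_cartesian_product)
  moreover have "card D \<ge> 1"
    using cone_zero finite_cone card_0_eq by fastforce
  ultimately show ?thesis by simp
qed

lemma sum_cone_cong:
  "[(\<Sum>w\<in>D. w k * w l) = 2 * (\<Sum>x\<in>T. x k * x l)] (mod 3)"
proof -
  have "(\<Sum>w\<in>D. w k * w l) = (\<Sum>w\<in>D - {\<lambda>_. 0}. w k * w l)"
    using cone_zero finite_cone by (simp add: sum.remove)
  also have "\<dots> = (\<Sum>p\<in>{1, 2} \<times> T. vscale3 (fst p) (snd p) k * vscale3 (fst p) (snd p) l)"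
    by (rule sum.reindex_bij_betw[OF bij_betw_scale_reps, symmetric])
  also have "\<dots> = (\<Sum>a\<in>{1::int, 2}. \<Sum>x\<in>T. vscale3 a x k * vscale3 a x l)"
    by (simp add: sum.cartesian_product split_def)
  also have "[\<dots> = (\<Sum>a\<in>{1::int, 2}. \<Sum>x\<in>T. x k * x l)] (mod 3)"
    by (intro cong_sum) (simp add: vscale3_def cong_vscale3_mult)
  finally show ?thesis by simp
qed

end

lemma proj_reps_Dzero:
  assumes "T \<subseteq> Dzero n (fF n1 n2 u v) - {\<lambda>_. 0}"
    and "\<forall>w \<in> Dzero n (fF n1 n2 u v) - {\<lambda>_. 0}.
           \<exists>!p. fst p \<in> {1, 2} \<and> snd p \<in> T \<and> w = vscale3 (fst p) (snd p)"
  shows "proj_reps n (Dzero n (fF n1 n2 u v)) T"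
proof
  show "Dzero n (fF n1 n2 u v) \<subseteq> F3vec n" by (auto simp: Dzero_def)
  show "(\<lambda>_. 0) \<in> Dzero n (fF n1 n2 u v)" by (simp add: Dzero_def F3vec_def fF_def)
  show "vscale3 a w \<in> Dzero n (fF n1 n2 u v)" if "a \<in> {1, 2}" "w \<in> Dzero n (fF n1 n2 u v)" for a w
    using that fF_vscale3[of w n a] by (auto simp: Dzero_def vscale3_F3vec)
qed (fact assms)+

section \<open>Codes with a nonsingular Gram matrix\<close>

definition red3 :: "'j set \<Rightarrow> ('j \<Rightarrow> int) \<Rightarrow> 'j \<Rightarrow> int" where
  "red3 J z = (\<lambda>j. if j \<in> J then z j mod 3 else 0)"

lemma red3_words3: "red3 J z \<in> words3 J"
proof -
  have "x mod 3 \<in> {0, 1, 2}" for x :: int by auto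
  then show ?thesis by (simp add: red3_def words3_def)
qed

lemma cong_red3: "j \<in> J \<Longrightarrow> [red3 J z j = z j] (mod 3)"
  by (simp add: red3_def cong_def)

lemma words3_eqI:
  assumes "a \<in> words3 J" "b \<in> words3 J" "\<And>j. j \<in> J \<Longrightarrow> [a j = b j] (mod 3)"
  shows "a = b"
proof
  fix j
  show "a j = b j"
  proof (cases "j \<in> J")
    case True
    then have "[a j = b j] (mod 3)" "a j \<in> {0, 1, 2}" "b j \<in> {0, 1, 2}"
      using assms by (auto simp: words3_def)
    then show ?thesis by (auto simp: cong_def)
  next
    case False
    then show ?thesis using assms(1,2) by (simp add: words3_def)
  qed
qed

lemma bij_betw_restrict_words3:
  "bij_betw (\<lambda>w. restrict w J) (words3 J) (PiE J (\<lambda>_. {0, 1, 2}))"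
  by (rule bij_betw_byWitness[where f' = "\<lambda>g j. if j \<in> J then g j else 0"])
     (auto simp: words3_def fun_eq_iff PiE_def extensional_def)

lemma finite_words3: "finite J \<Longrightarrow> finite (words3 J)"
  using bij_betw_finite[OF bij_betw_restrict_words3[of J]] by (simp add: finite_PiE)

lemma card_words3: "finite J \<Longrightarrow> card (words3 J) = 3 ^ card J"
  using bij_betw_same_card[OF bij_betw_restrict_words3[of J]] by (simp add: card_PiE numeral_3_eq_3)

lemma cong_inner_red3: "[(\<Sum>j\<in>J. red3 J f j * y j) = (\<Sum>j\<in>J. f j * y j)] (mod 3)"
  by (intro cong_sum cong_mult cong_red3 cong_refl)

definition encode3 :: "nat \<Rightarrow> 'j set \<Rightarrow> (nat \<Rightarrow> 'j \<Rightarrow> int) \<Rightarrow> (nat \<Rightarrow> int) \<Rightarrow> 'j \<Rightarrow> int" where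
  "encode3 k J M c = red3 J (\<lambda>j. \<Sum>i<k. c i * M i j)"

definition syndrome :: "'j set \<Rightarrow> (nat \<Rightarrow> 'j \<Rightarrow> int) \<Rightarrow> ('j \<Rightarrow> int) \<Rightarrow> nat \<Rightarrow> int" where
  "syndrome J M z i = (\<Sum>j\<in>J. z j * M i j)"

definition gram :: "'j set \<Rightarrow> (nat \<Rightarrow> 'j \<Rightarrow> int) \<Rightarrow> nat \<Rightarrow> nat \<Rightarrow> int" where
  "gram J M i' i = (\<Sum>j\<in>J. M i' j * M i j)"

lemma gen_code_eq_image: "gen_code k J M = encode3 k J M ` F3vec k"
  unfolding gen_code_def encode3_def red3_def by auto

lemma cong_inner_encode3:
  "[(\<Sum>j\<in>J. z j * encode3 k J M c j) = (\<Sum>i<k. c i * syndrome J M z i)] (mod 3)"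
proof -
  have "[(\<Sum>j\<in>J. z j * encode3 k J M c j) = (\<Sum>j\<in>J. z j * (\<Sum>i<k. c i * M i j))] (mod 3)"
    by (intro cong_sum cong_scalar_left) (simp add: encode3_def red3_def cong_def)
  also have "(\<Sum>j\<in>J. z j * (\<Sum>i<k. c i * M i j)) = (\<Sum>i<k. c i * syndrome J M z i)"
    by (simp add: syndrome_def sum_distrib_left sum.swap[of _ J] mult_ac)
  finally show ?thesis .
qed

lemma cong_syndrome_encode3:
  "[syndrome J M (encode3 k J M c) i = (\<Sum>i'<k. c i' * gram J M i' i)] (mod 3)"
proof -
  have "syndrome J M (encode3 k J M c) i = (\<Sum>j\<in>J. M i j * encode3 k J M c j)"
    by (simp add: syndrome_def mult.commute)
  also have "[\<dots> = (\<Sum>i'<k. c i' * syndrome J M (M i) i')] (mod 3)"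
    by (rule cong_inner_encode3)
  also have "(\<Sum>i'<k. c i' * syndrome J M (M i) i') = (\<Sum>i'<k. c i' * gram J M i' i)"
    by (simp add: syndrome_def gram_def mult.commute)
  finally show ?thesis .
qed

lemma sum_unitvec: "i < k \<Longrightarrow> (\<Sum>i'<k. unitvec i i' * g i') = (g i :: int)"
  by (simp add: unitvec_def if_distrib[of "\<lambda>x. x * _"] cong: if_cong)

lemma dual_code_gen_code_iff:
  "z \<in> dual_code J (gen_code k J M) \<longleftrightarrow>
     z \<in> words3 J \<and> (\<forall>i<k. (3::int) dvd syndrome J M z i)"
proof
  assume z: "z \<in> dual_code J (gen_code k J M)"
  have "[syndrome J M z i = 0] (mod 3)" if "i < k" for i
  proof -
    have "unitvec i \<in> F3vec k" using that by (simp add: unitvec_def F3vec_def)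
    then have "[(\<Sum>j\<in>J. z j * encode3 k J M (unitvec i) j) = 0] (mod 3)"
      using z by (auto simp: dual_code_def gen_code_eq_image cong_def)
    moreover have "(\<Sum>i'<k. unitvec i i' * syndrome J M z i') = syndrome J M z i"
      using that by (simp add: sum_unitvec)
    ultimately show ?thesis
      using cong_inner_encode3[where z = z and c = "unitvec i"] by (metis cong_sym cong_trans)
  qed
  then show "z \<in> words3 J \<and> (\<forall>i<k. (3::int) dvd syndrome J M z i)"
    using z by (simp add: dual_code_def cong_0_iff)
next
  assume z: "z \<in> words3 J \<and> (\<forall>i<k. (3::int) dvd syndrome J M z i)"
  have "[(\<Sum>j\<in>J. z j * encode3 k J M c j) = 0] (mod 3)" for c
  proof -
    have "[(\<Sum>i<k. c i * syndrome J M z i) = (\<Sum>i<k. c i * 0)] (mod 3)"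
      using z by (intro cong_sum cong_scalar_left) (auto simp: cong_0_iff)
    with cong_inner_encode3[where z = z and c = c] show ?thesis
      by (auto intro: cong_trans)
  qed
  then show "z \<in> dual_code J (gen_code k J M)"
    using z by (auto simp: dual_code_def gen_code_eq_image cong_def)
qed

lemma zero_dual_code: "(\<lambda>_. 0) \<in> dual_code J C"
  by (simp add: dual_code_def words3_def)

definition nonsingular_mod3 :: "nat \<Rightarrow> (nat \<Rightarrow> nat \<Rightarrow> int) \<Rightarrow> bool" where
  "nonsingular_mod3 k A \<longleftrightarrow>
     (\<forall>c. (\<forall>i<k. 3 dvd (\<Sum>i'<k. c i' * A i' i)) \<longrightarrow> (\<forall>i<k. 3 dvd c i))"

lemma nonsingular_mod3_cancel:
  assumes A: "nonsingular_mod3 k A" and c: "c \<in> F3vec k" "c' \<in> F3vec k"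
    and eq: "\<And>i. i < k \<Longrightarrow> [(\<Sum>i'<k. c i' * A i' i) = (\<Sum>i'<k. c' i' * A i' i)] (mod 3)"
  shows "c = c'"
proof (rule F3vec_eqI[OF c])
  have "\<forall>i<k. [(\<Sum>i'<k. (c i' - c' i') * A i' i) = 0] (mod 3)"
    using eq by (simp add: left_diff_distrib sum_subtractf cong_diff_iff_cong_0)
  then have "[c i - c' i = 0] (mod 3)" if "i < k" for i
    using spec[OF A[unfolded nonsingular_mod3_def], of "\<lambda>i. c i - c' i"] that
    by (simp add: cong_0_iff)
  then show "[c i = c' i] (mod 3)" if "i < k" for i
    using that by (simp add: cong_diff_iff_cong_0)
qed

lemma nonsingular_mod3_solvable:
  assumes A: "nonsingular_mod3 k A" and b: "b \<in> F3vec k"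
  obtains c where "c \<in> F3vec k" "\<And>i. i < k \<Longrightarrow> [(\<Sum>i'<k. c i' * A i' i) = b i] (mod 3)"
proof -
  define \<phi> where "\<phi> c = (\<lambda>i. if i < k then (\<Sum>i'<k. c i' * A i' i) mod 3 else 0)" for c
  have "x mod 3 \<in> {0, 1, 2}" for x :: int by auto
  then have "\<phi> ` F3vec k \<subseteq> F3vec k" by (auto simp: \<phi>_def F3vec_def)
  moreover have "inj_on \<phi> (F3vec k)"
  proof (rule inj_onI)
    fix c c' assume c: "c \<in> F3vec k" "c' \<in> F3vec k" and eq: "\<phi> c = \<phi> c'"
    show "c = c'"
    proof (rule nonsingular_mod3_cancel[OF A c])
      fix i assume "i < k"
      then show "[(\<Sum>i'<k. c i' * A i' i) = (\<Sum>i'<k. c' i' * A i' i)] (mod 3)"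
        using fun_cong[OF eq, of i] by (simp add: \<phi>_def cong_def)
    qed
  qed
  ultimately have "\<phi> ` F3vec k = F3vec k" by (rule endo_inj_surj[OF finite_F3vec])
  then obtain c where "c \<in> F3vec k" "b = \<phi> c" using b by blast
  then show thesis by (intro that) (auto simp: \<phi>_def cong_def)
qed

locale gram_code =
  fixes k :: nat and J :: "'j set" and M :: "nat \<Rightarrow> 'j \<Rightarrow> int"
  assumes finite_J: "finite J" and gram_nonsingular: "nonsingular_mod3 k (gram J M)"
begin

lemma encode3_eqD:
  assumes "c \<in> F3vec k" "c' \<in> F3vec k"
    and "\<And>i. i < k \<Longrightarrow> [syndrome J M (encode3 k J M c) i = syndrome J M (encode3 k J M c') i] (mod 3)"
  shows "c = c'"
proof (rule nonsingular_mod3_cancel[OF gram_nonsingular assms(1,2)])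
  fix i assume "i < k"
  show "[(\<Sum>i'<k. c i' * gram J M i' i) = (\<Sum>i'<k. c' i' * gram J M i' i)] (mod 3)"
    by (rule cong_trans[OF cong_trans[OF cong_sym[OF cong_syndrome_encode3] assms(3)[OF \<open>i < k\<close>]]
          cong_syndrome_encode3])
qed

lemma card_gen_code: "card (gen_code k J M) = 3 ^ k"
proof -
  have "inj_on (encode3 k J M) (F3vec k)"
    by (rule inj_onI) (auto intro: encode3_eqD)
  then show ?thesis by (simp add: gen_code_eq_image card_image card_F3vec)
qed

lemma encode3_zero: "encode3 k J M (\<lambda>_. 0) = (\<lambda>_. 0)"
  by (simp add: encode3_def red3_def fun_eq_iff)

lemma zero_gen_code: "(\<lambda>_. 0) \<in> gen_code k J M"
proof -
  have "(\<lambda>_. 0) \<in> F3vec k" by (simp add: F3vec_def)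
  then show ?thesis unfolding gen_code_eq_image using encode3_zero by (metis image_eqI)
qed

lemma gen_code_LCD: "is_LCD J (gen_code k J M)"
proof -
  have "x = (\<lambda>_. 0)" if C: "x \<in> gen_code k J M" and D: "x \<in> dual_code J (gen_code k J M)" for x
  proof -
    obtain c where c: "c \<in> F3vec k" and x: "x = encode3 k J M c"
      using C unfolding gen_code_eq_image by blast
    have "[syndrome J M x i = 0] (mod 3)" if "i < k" for i
      using D that by (simp add: dual_code_gen_code_iff cong_0_iff)
    then have "c = (\<lambda>_. 0)"
      using c by (intro encode3_eqD) (auto simp: F3vec_def x encode3_zero syndrome_def)
    then show ?thesis using x encode3_zero by simp
  qed
  then show ?thesis
    unfolding is_LCD_def using zero_gen_code zero_dual_code by blast
qed

lemma words3_decomp: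
  assumes z: "z \<in> words3 J"
  obtains c d where "c \<in> F3vec k" "d \<in> dual_code J (gen_code k J M)"
    "z = red3 J (\<lambda>j. encode3 k J M c j + d j)"
proof -
  define b where "b i = (if i < k then syndrome J M z i mod 3 else 0)" for i
  have "x mod 3 \<in> {0, 1, 2}" for x :: int by auto
  then have "b \<in> F3vec k" by (simp add: b_def F3vec_def)
  then obtain c where c: "c \<in> F3vec k"
    and cb: "\<And>i. i < k \<Longrightarrow> [(\<Sum>i'<k. c i' * gram J M i' i) = b i] (mod 3)"
    using nonsingular_mod3_solvable[OF gram_nonsingular] by blast
  define d where "d = red3 J (\<lambda>j. z j - encode3 k J M c j)"
  have "[syndrome J M d i = 0] (mod 3)" if "i < k" for i
  proof -
    have "syndrome J M (\<lambda>j. z j - encode3 k J M c j) i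
        = syndrome J M z i - syndrome J M (encode3 k J M c) i"
      by (simp add: syndrome_def left_diff_distrib sum_subtractf)
    then have "[syndrome J M d i = syndrome J M z i - syndrome J M (encode3 k J M c) i] (mod 3)"
      using cong_inner_red3[of J "\<lambda>j. z j - encode3 k J M c j" "M i"]
      unfolding d_def syndrome_def by simp
    moreover have "[syndrome J M (encode3 k J M c) i = syndrome J M z i] (mod 3)"
      using cong_trans[OF cong_syndrome_encode3[of J M k c i] cb[OF that]] that
      by (simp add: b_def cong_def)
    then have "[syndrome J M z i - syndrome J M (encode3 k J M c) i = 0] (mod 3)"
      by (simp add: cong_diff_iff_cong_0 cong_sym)
    ultimately show ?thesis
      by (rule cong_trans)
  qed
  then have d: "d \<in> dual_code J (gen_code k J M)"
    by (simp add: dual_code_gen_code_iff d_def red3_words3 cong_0_iff)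
  have "z = red3 J (\<lambda>j. encode3 k J M c j + d j)"
  proof (rule words3_eqI[OF z red3_words3])
    fix j assume "j \<in> J"
    then show "[z j = red3 J (\<lambda>j. encode3 k J M c j + d j) j] (mod 3)"
      by (simp add: d_def red3_def cong_def mod_add_right_eq)
  qed
  with c d show thesis by (rule that)
qed

lemma words3_decomp_unique:
  assumes c: "c \<in> F3vec k" "c' \<in> F3vec k"
    and d: "d \<in> dual_code J (gen_code k J M)" "d' \<in> dual_code J (gen_code k J M)"
    and eq: "red3 J (\<lambda>j. encode3 k J M c j + d j) = red3 J (\<lambda>j. encode3 k J M c' j + d' j)"
  shows "c = c'" "d = d'"
proof -
  have syn: "[syndrome J M (red3 J (\<lambda>j. encode3 k J M c j + d j)) i
      = syndrome J M (encode3 k J M c) i] (mod 3)"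
    if "i < k" "d \<in> dual_code J (gen_code k J M)" for c d i
  proof -
    have "[syndrome J M d i = 0] (mod 3)"
      using that by (simp add: dual_code_gen_code_iff cong_0_iff)
    then have "[syndrome J M (encode3 k J M c) i + syndrome J M d i
        = syndrome J M (encode3 k J M c) i + 0] (mod 3)"
      by (intro cong_add cong_refl)
    then show ?thesis
      using cong_inner_red3[of J "\<lambda>j. encode3 k J M c j + d j" "M i"]
      by (simp add: syndrome_def distrib_right sum.distrib cong_trans)
  qed
  show "c = c'"
  proof (rule encode3_eqD[OF c])
    fix i assume "i < k"
    show "[syndrome J M (encode3 k J M c) i = syndrome J M (encode3 k J M c') i] (mod 3)"
      using syn[OF \<open>i < k\<close> d(1), of c] syn[OF \<open>i < k\<close> d(2), of c'] unfolding eq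
      by (metis cong_sym cong_trans)
  qed
  show "d = d'"
  proof (rule words3_eqI)
    show "d \<in> words3 J" "d' \<in> words3 J" using d by (simp_all add: dual_code_def)
    fix j assume "j \<in> J"
    then have "[encode3 k J M c j + d j = encode3 k J M c j + d' j] (mod 3)"
      using fun_cong[OF eq, of j] \<open>c = c'\<close> by (simp add: red3_def cong_def)
    then show "[d j = d' j] (mod 3)"
      by (simp add: cong_add_lcancel)
  qed
qed

lemma bij_betw_gen_code_plus_dual:
  "bij_betw (\<lambda>(c, d). red3 J (\<lambda>j. encode3 k J M c j + d j))
     (F3vec k \<times> dual_code J (gen_code k J M)) (words3 J)"
proof (rule bij_betw_imageI)
  show "inj_on (\<lambda>(c, d). red3 J (\<lambda>j. encode3 k J M c j + d j))
      (F3vec k \<times> dual_code J (gen_code k J M))"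
    by (rule inj_onI) (auto dest: words3_decomp_unique)
  show "(\<lambda>(c, d). red3 J (\<lambda>j. encode3 k J M c j + d j)) ` (F3vec k \<times> dual_code J (gen_code k J M))
      = words3 J"
    by (auto simp: red3_words3 elim!: words3_decomp intro!: image_eqI)
qed

lemma card_dual_code: "k \<le> card J \<and> card (dual_code J (gen_code k J M)) = 3 ^ (card J - k)"
proof -
  let ?D = "dual_code J (gen_code k J M)"
  have eq: "3 ^ k * card ?D = 3 ^ card J"
    using bij_betw_same_card[OF bij_betw_gen_code_plus_dual] card_words3[OF finite_J]
    by (simp add: card_cartesian_product card_F3vec)
  have "?D \<subseteq> words3 J" by (auto simp: dual_code_def)
  then have "finite ?D" using finite_words3[OF finite_J] by (rule finite_subset)
  then have "card ?D \<noteq> 0" using zero_dual_code[of J "gen_code k J M"] by auto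
  then have "(3::nat) ^ k * 1 \<le> 3 ^ card J"
    unfolding eq[symmetric] by (intro mult_le_mono2) simp
  then have "k \<le> card J"
    using power_le_imp_le_exp[of 3 k "card J"] by simp
  moreover from this have "(3::nat) ^ card J = 3 ^ k * 3 ^ (card J - k)"
    by (simp flip: power_add)
  ultimately show ?thesis
    using eq by simp
qed

lemma dual_code_LCD: "is_LCD J (dual_code J (gen_code k J M))"
proof -
  let ?C = "gen_code k J M"
  have "x = (\<lambda>_. 0)" if x: "x \<in> dual_code J ?C" "x \<in> dual_code J (dual_code J ?C)" for x
  proof (rule words3_eqI)
    show "x \<in> words3 J" "(\<lambda>_. 0) \<in> words3 J" using x(1) by (simp_all add: dual_code_def words3_def)
    fix j0 assume "j0 \<in> J"
    define e where "e j = (if j = j0 then 1 else 0 :: int)" for j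
    have "e \<in> words3 J" using \<open>j0 \<in> J\<close> by (simp add: e_def words3_def)
    then obtain c d where c: "c \<in> F3vec k" and d: "d \<in> dual_code J ?C"
      and e: "e = red3 J (\<lambda>j. encode3 k J M c j + d j)"
      by (rule words3_decomp)
    have "(\<Sum>j\<in>J. x j * e j) = (\<Sum>j\<in>J. if j = j0 then x j else 0)"
      by (intro sum.cong) (auto simp: e_def)
    also have "\<dots> = x j0"
      using \<open>j0 \<in> J\<close> finite_J by simp
    also have "[(\<Sum>j\<in>J. x j * e j) = (\<Sum>j\<in>J. x j * encode3 k J M c j) + (\<Sum>j\<in>J. x j * d j)] (mod 3)"
      using cong_inner_red3[of J "\<lambda>j. encode3 k J M c j + d j" x]
      by (simp add: e mult.commute distrib_left sum.distrib)
    moreover have "[(\<Sum>j\<in>J. x j * encode3 k J M c j) = 0] (mod 3)"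
      using x(1) c by (auto simp: dual_code_def gen_code_eq_image cong_def)
    moreover have "[(\<Sum>j\<in>J. x j * d j) = 0] (mod 3)"
      using x(2) d by (auto simp: dual_code_def cong_def)
    ultimately show "[x j0 = (\<lambda>_. 0) j0] (mod 3)"
      by (metis add_0 cong_add cong_trans)
  qed
  moreover have "(\<lambda>_. 0) \<in> dual_code J (dual_code J ?C)" by (rule zero_dual_code)
  ultimately show ?thesis
    unfolding is_LCD_def using zero_dual_code by blast
qed

end

section \<open>The generator matrix G'\<close>

definition idot :: "nat \<Rightarrow> (nat \<Rightarrow> int) \<Rightarrow> (nat \<Rightarrow> int) \<Rightarrow> int" where
  "idot n a b = (\<Sum>k<n. a k * b k)"

definition alpha_comb :: "nat \<Rightarrow> nat \<Rightarrow> (nat \<Rightarrow> int) \<Rightarrow> nat \<Rightarrow> int" where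
  "alpha_comb n1 n c = (\<lambda>k. \<Sum>i<n. c i * alphavec n1 i k)"

lemma dot3_eq_idot_mod: "dot3 n a b = idot n a b mod 3"
  by (simp add: dot3_def idot_def)

lemma idot_commute: "idot n a b = idot n b a"
  by (simp add: idot_def mult.commute)

lemma alphavec_apply:
  "alphavec n1 i k =
     (if i < n1 then (if k = i then 1 else 0)
      else (if k = 0 then 1 else 0) + (if k = i then 1 else 0))"
  by (simp add: alphavec_def unitvec_def)

lemma idot_alphavec:
  assumes "i < n" "1 \<le> n1"
  shows "idot n (alphavec n1 i) y = (if i < n1 then y i else y 0 + y i)"
proof (cases "i < n1")
  case True
  have "idot n (alphavec n1 i) y = (\<Sum>k<n. if k = i then y k else 0)"
    unfolding idot_def alphavec_apply using True by (intro sum.cong) auto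
  then show ?thesis using True assms by simp
next
  case False
  have "idot n (alphavec n1 i) y = (\<Sum>k<n. (if k = 0 then y k else 0) + (if k = i then y k else 0))"
    unfolding idot_def alphavec_apply using False by (intro sum.cong) (auto simp: algebra_simps)
  then show ?thesis using False assms by (simp add: sum.distrib)
qed

lemma alpha_comb_apply:
  assumes "k < n" "1 \<le> n1"
  shows "alpha_comb n1 n c k = c k + (if k = 0 then (\<Sum>i\<in>{n1..<n}. c i) else 0)"
proof -
  have "alpha_comb n1 n c k
      = (\<Sum>i<n. (if i = k then c i else 0) + (if k = 0 \<and> n1 \<le> i then c i else 0))"
    unfolding alpha_comb_def alphavec_apply using assms by (intro sum.cong) auto
  also have "\<dots> = c k + (\<Sum>i<n. if k = 0 \<and> n1 \<le> i then c i else 0)"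
    using assms by (simp add: sum.distrib)
  also have "(\<Sum>i<n. if k = 0 \<and> n1 \<le> i then c i else 0) = (if k = 0 then (\<Sum>i\<in>{n1..<n}. c i) else 0)"
    by (simp add: sum.inter_filter[symmetric] atLeastLessThan_def Int_def conj_commute)
  finally show ?thesis .
qed

lemma idot_alpha_comb: "idot n (alpha_comb n1 n c) y = (\<Sum>i<n. c i * idot n (alphavec n1 i) y)"
proof -
  have "idot n (alpha_comb n1 n c) y = (\<Sum>k<n. \<Sum>i<n. c i * alphavec n1 i k * y k)"
    by (simp add: idot_def alpha_comb_def sum_distrib_right)
  also have "\<dots> = (\<Sum>i<n. \<Sum>k<n. c i * alphavec n1 i k * y k)"
    by (rule sum.swap)
  also have "\<dots> = (\<Sum>i<n. c i * idot n (alphavec n1 i) y)"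
    by (simp add: idot_def sum_distrib_left mult.assoc)
  finally show ?thesis .
qed

text \<open>The vectors alpha_i form a basis of F_3^n: the two lemmas below say that the matrix with
  rows alpha_i is invertible modulo 3, seen from either side.\<close>

lemma alphavec_spanning:
  assumes n1: "1 \<le> n1" and y: "\<And>i. i < n \<Longrightarrow> (3::int) dvd idot n (alphavec n1 i) y"
    and k: "k < n"
  shows "3 dvd y k"
proof -
  have "3 dvd y 0" using y[of 0] idot_alphavec[of 0 n n1 y] n1 k by simp
  then show ?thesis
    using y[OF k] idot_alphavec[OF k n1, of y] by (cases "k < n1") (simp_all add: dvd_add_right_iff)
qed

lemma alphavec_independent:
  assumes n1: "1 \<le> n1" and c: "\<And>k. k < n \<Longrightarrow> (3::int) dvd alpha_comb n1 n c k"
    and i: "i < n"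
  shows "3 dvd c i"
proof -
  have nz: "3 dvd c i" if "i < n" "i \<noteq> 0" for i
    using c[OF that(1)] alpha_comb_apply[OF that(1) n1] that by simp
  have "3 dvd (\<Sum>i\<in>{n1..<n}. c i)" by (rule dvd_sum) (use nz n1 in auto)
  moreover have "3 dvd (c 0 + (\<Sum>i\<in>{n1..<n}. c i))"
    using c[of 0] alpha_comb_apply[of 0 n n1 c] n1 i by simp
  ultimately have "3 dvd c 0" by (simp add: dvd_add_left_iff)
  then show ?thesis using nz[OF i] by (cases "i = 0") auto
qed

text \<open>Column j of [A^T, X] in the factorisation G' = A [A^T, X].\<close>

definition col :: "nat \<Rightarrow> nat + (nat \<Rightarrow> int) \<Rightarrow> nat \<Rightarrow> int" where
  "col n1 j = (case j of Inl a \<Rightarrow> alphavec n1 a | Inr x \<Rightarrow> x)"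

lemma Gprime_eq: "Gprime n1 n i j = idot n (alphavec n1 i) (col n1 j) mod 3"
  by (cases j) (simp_all add: Gprime_def col_def dot3_eq_idot_mod)

lemma finite_colset: "finite T \<Longrightarrow> finite (colset n T)"
  by (simp add: colset_def)

lemma card_colset: "finite T \<Longrightarrow> card (colset n T) = n + card T"
  unfolding colset_def by (subst card_Un_disjoint) (auto simp: card_image)

lemma sum_colset:
  "finite T \<Longrightarrow> (\<Sum>j\<in>colset n T. g j) = (\<Sum>a<n. g (Inl a)) + (\<Sum>x\<in>T. g (Inr x))"
  unfolding colset_def by (subst sum.union_disjoint) (auto simp: sum.reindex)

lemma sum_idot_dvd3:
  assumes "\<And>k l. k < n \<Longrightarrow> l < n \<Longrightarrow> (3::int) dvd (\<Sum>x\<in>T. x k * x l)"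
  shows "3 dvd (\<Sum>x\<in>T. idot n a x * idot n b x)"
proof -
  have "(\<Sum>x\<in>T. idot n a x * idot n b x) = (\<Sum>x\<in>T. \<Sum>k<n. \<Sum>l<n. (a k * b l) * (x k * x l))"
    by (simp add: idot_def sum_product mult_ac)
  also have "\<dots> = (\<Sum>k<n. \<Sum>l<n. (a k * b l) * (\<Sum>x\<in>T. x k * x l))"
    by (simp add: sum_distrib_left sum.swap[of _ T])
  also have "3 dvd \<dots>"
    by (intro dvd_sum dvd_mult assms) auto
  finally show ?thesis .
qed

lemma cong_gram_Gprime:
  fixes n :: nat and c :: "nat \<Rightarrow> int"
  assumes T: "finite T" and n1: "1 \<le> n1"
  defines "\<beta> \<equiv> alpha_comb n1 n c"
  shows "[(\<Sum>i'<n. c i' * gram (colset n T) (Gprime n1 n) i' i)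
        = idot n (alphavec n1 i) (alpha_comb n1 n (\<lambda>a. idot n \<beta> (alphavec n1 a)))
          + (\<Sum>x\<in>T. idot n \<beta> x * idot n (alphavec n1 i) x)] (mod 3)"
proof -
  let ?J = "colset n T" and ?G = "Gprime n1 n"
  have "(\<Sum>i'<n. c i' * gram ?J ?G i' i) = (\<Sum>j\<in>?J. (\<Sum>i'<n. c i' * ?G i' j) * ?G i j)"
    by (simp add: gram_def sum_distrib_left sum_distrib_right sum.swap[of _ ?J] mult_ac)
  also have "[\<dots> = (\<Sum>j\<in>?J. idot n \<beta> (col n1 j) * idot n (alphavec n1 i) (col n1 j))] (mod 3)"
  proof (intro cong_sum cong_mult)
    fix j
    show "[?G i j = idot n (alphavec n1 i) (col n1 j)] (mod 3)"
      by (simp add: Gprime_eq cong_def)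
    have "[(\<Sum>i'<n. c i' * ?G i' j) = (\<Sum>i'<n. c i' * idot n (alphavec n1 i') (col n1 j))] (mod 3)"
      by (intro cong_sum cong_scalar_left) (simp add: Gprime_eq cong_def)
    then show "[(\<Sum>i'<n. c i' * ?G i' j) = idot n \<beta> (col n1 j)] (mod 3)"
      by (simp add: \<beta>_def idot_alpha_comb)
  qed
  also have "(\<Sum>j\<in>?J. idot n \<beta> (col n1 j) * idot n (alphavec n1 i) (col n1 j))
      = (\<Sum>a<n. idot n \<beta> (alphavec n1 a) * idot n (alphavec n1 i) (alphavec n1 a))
        + (\<Sum>x\<in>T. idot n \<beta> x * idot n (alphavec n1 i) x)"
    by (simp add: sum_colset[OF T] col_def)
  also have "(\<Sum>a<n. idot n \<beta> (alphavec n1 a) * idot n (alphavec n1 i) (alphavec n1 a))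
      = idot n (alphavec n1 i) (alpha_comb n1 n (\<lambda>a. idot n \<beta> (alphavec n1 a)))"
    by (simp add: idot_commute[of n "alphavec n1 i"] idot_alpha_comb)
  finally show ?thesis .
qed

text \<open>Since the columns x \<in> T satisfy sum_x x_k x_l = 0 over F_3, the Gram matrix of G' = A [A^T, X]
  reduces to (A A^T)^2, and A is invertible.\<close>

lemma gram_Gprime_nonsingular:
  assumes T: "finite T" and n1: "1 \<le> n1"
    and TT: "\<And>k l. k < n \<Longrightarrow> l < n \<Longrightarrow> (3::int) dvd (\<Sum>x\<in>T. x k * x l)"
  shows "nonsingular_mod3 n (gram (colset n T) (Gprime n1 n))"
  unfolding nonsingular_mod3_def
proof (intro allI impI)
  fix c i assume H: "\<forall>i<n. 3 dvd (\<Sum>i'<n. c i' * gram (colset n T) (Gprime n1 n) i' i)"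
    and i: "i < n"
  define \<beta> where "\<beta> = alpha_comb n1 n c"
  define \<gamma> where "\<gamma> = (\<lambda>a. idot n \<beta> (alphavec n1 a))"
  have "3 dvd idot n (alphavec n1 i) (alpha_comb n1 n \<gamma>)" if "i < n" for i
  proof -
    have "3 dvd idot n (alphavec n1 i) (alpha_comb n1 n \<gamma>)
        + (\<Sum>x\<in>T. idot n \<beta> x * idot n (alphavec n1 i) x)"
      using H that cong_dvd_iff[OF cong_gram_Gprime[OF T n1, where n = n and c = c and i = i]]
      by (simp add: \<beta>_def \<gamma>_def)
    moreover have "3 dvd (\<Sum>x\<in>T. idot n \<beta> x * idot n (alphavec n1 i) x)"
      by (rule sum_idot_dvd3[OF TT])
    ultimately show ?thesis by (simp add: dvd_add_left_iff)
  qed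
  then have "3 dvd alpha_comb n1 n \<gamma> k" if "k < n" for k
    using that by (rule alphavec_spanning[OF n1])
  then have "3 dvd \<gamma> a" if "a < n" for a
    using that by (rule alphavec_independent[OF n1])
  then have "3 dvd idot n (alphavec n1 a) \<beta>" if "a < n" for a
    using that by (simp add: \<gamma>_def idot_commute)
  then have "3 dvd alpha_comb n1 n c k" if "k < n" for k
    using that unfolding \<beta>_def by (rule alphavec_spanning[OF n1])
  then show "3 dvd c i"
    using i by (rule alphavec_independent[OF n1])
qed

lemma cong_syndrome_Gprime:
  "[syndrome J (Gprime n1 n) z i = idot n (alphavec n1 i) (\<lambda>k. \<Sum>j\<in>J. z j * col n1 j k)] (mod 3)"
proof -
  have "[syndrome J (Gprime n1 n) z i = (\<Sum>j\<in>J. z j * idot n (alphavec n1 i) (col n1 j))] (mod 3)"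
    unfolding syndrome_def by (intro cong_sum cong_scalar_left) (simp add: Gprime_eq cong_def)
  also have "(\<Sum>j\<in>J. z j * idot n (alphavec n1 i) (col n1 j))
      = idot n (alphavec n1 i) (\<lambda>k. \<Sum>j\<in>J. z j * col n1 j k)"
    unfolding idot_def by (simp add: sum_distrib_left sum.swap[of _ J] mult_ac)
  finally show ?thesis .
qed

lemma dual_code_Gprime_iff:
  assumes n1: "1 \<le> n1"
  shows "z \<in> dual_code J (gen_code n J (Gprime n1 n)) \<longleftrightarrow>
           z \<in> words3 J \<and> (\<forall>k<n. (3::int) dvd (\<Sum>j\<in>J. z j * col n1 j k))"
proof -
  have "(\<forall>i<n. 3 dvd syndrome J (Gprime n1 n) z i) \<longleftrightarrow>
        (\<forall>i<n. (3::int) dvd idot n (alphavec n1 i) (\<lambda>k. \<Sum>j\<in>J. z j * col n1 j k))"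
    using cong_dvd_iff[OF cong_syndrome_Gprime] by blast
  also have "\<dots> \<longleftrightarrow> (\<forall>k<n. (3::int) dvd (\<Sum>j\<in>J. z j * col n1 j k))"
  proof
    show "\<forall>k<n. 3 dvd (\<Sum>j\<in>J. z j * col n1 j k)"
      if "\<forall>i<n. 3 dvd idot n (alphavec n1 i) (\<lambda>k. \<Sum>j\<in>J. z j * col n1 j k)"
      using that alphavec_spanning[OF n1] by blast
    show "\<forall>i<n. 3 dvd idot n (alphavec n1 i) (\<lambda>k. \<Sum>j\<in>J. z j * col n1 j k)"
      if "\<forall>k<n. 3 dvd (\<Sum>j\<in>J. z j * col n1 j k)"
      using that unfolding idot_def by (blast intro: dvd_sum dvd_mult)
  qed
  finally show ?thesis by (simp add: dual_code_gen_code_iff)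
qed

lemma alphavec_self: "1 \<le> n1 \<Longrightarrow> alphavec n1 a a = 1"
  by (simp add: alphavec_apply)

lemma alphavec_nonzeroD: "alphavec n1 b a \<noteq> 0 \<Longrightarrow> a = b \<or> (a = 0 \<and> n1 \<le> b)"
  by (auto simp: alphavec_apply split: if_splits)

lemma alphavec_F3vec: "1 \<le> n1 \<Longrightarrow> a < n \<Longrightarrow> alphavec n1 a \<in> F3vec n"
  by (auto simp: F3vec_def alphavec_apply)

lemma fF_alphavec_nonzero:
  assumes n1: "1 \<le> n1" and n2: "1 \<le> n2" and u: "\<forall>i<n1. u i \<in> {1, 2}" and v: "\<forall>i<n1. v i \<in> {1, 2}"
  shows "fF n1 n2 u v (alphavec n1 a) \<noteq> 0"
proof -
  let ?w = "alphavec n1 a"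
  have "?w (n1 + i) = 0 \<or> ?w (n1 + n2 + i) = 0" for i
    using n1 n2 alphavec_nonzeroD[of n1 a "n1 + i"] alphavec_nonzeroD[of n1 a "n1 + n2 + i"]
    by linarith
  then have yz: "yz_form n1 n2 ?w = 0"
    unfolding yz_form_def by (intro sum.neutral) auto
  have diag: "diag_form n1 c ?w = c (if a < n1 then a else 0)" for c
  proof -
    have "diag_form n1 c ?w = (\<Sum>i<n1. if i = (if a < n1 then a else 0) then c i else 0)"
      unfolding diag_form_def using n1 by (intro sum.cong) (auto simp: alphavec_apply)
    then show ?thesis using n1 by simp
  qed
  have "u (if a < n1 then a else 0) \<in> {1, 2}" "v (if a < n1 then a else 0) \<in> {1, 2}"
    using u v n1 by auto
  then have "f_int n1 n2 u v ?w \<in> {1, 2}"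
    by (simp add: f_int_def yz diag)
  then show ?thesis by (auto simp: fF_eq_f_int_mod)
qed

lemma unitvec_Dzero:
  assumes "n1 < n"
  shows "unitvec n1 \<in> Dzero n (fF n1 n2 u v)" "unitvec n1 \<noteq> (\<lambda>_. 0)"
proof -
  have "z_zero n1 n2 (unitvec n1)" "diag_form n1 u (unitvec n1) = 0"
    "yz_form n1 n2 (unitvec n1) = 0"
    by (simp_all add: z_zero_def diag_form_def yz_form_def unitvec_def)
  then show "unitvec n1 \<in> Dzero n (fF n1 n2 u v)"
    using assms by (simp add: Dzero_def F3vec_def unitvec_def fF_eq_f_int_mod f_int_def)
  show "unitvec n1 \<noteq> (\<lambda>_. 0)" by (metis unitvec_def zero_neq_one)
qed

section \<open>The code and its dual\<close>

lemma dvd3_unit_mult: "c \<in> {1, 2} \<Longrightarrow> (3::int) dvd c * x \<Longrightarrow> 3 dvd x"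
  by auto presburger

lemma cong_of_dvd3_relation:
  fixes x y d1 d2 :: int
  assumes "d1 \<in> {1, 2}" "d2 \<in> {1, 2}" "3 dvd d1 * x + d2 * y"
  shows "[x = (- (d1 * d2)) mod 3 * y] (mod 3)"
  using assms unfolding cong_def by auto presburger+

locale code_setting =
  fixes n1 n2 s n :: nat and u v :: "nat \<Rightarrow> int" and T :: "(nat \<Rightarrow> int) set"
  assumes n1: "n1 \<ge> 1" and n2: "n2 \<ge> 1" and n_def: "n = n1 + 2 * n2 + s"
    and u: "\<forall>i<n1. u i \<in> {1, 2}" and v: "\<forall>i<n1. v i \<in> {1, 2}"
    and T_sub: "T \<subseteq> Dzero n (fF n1 n2 u v) - {\<lambda>_. 0}"
    and T_rep: "\<forall>w \<in> Dzero n (fF n1 n2 u v) - {\<lambda>_. 0}.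
                  \<exists>!p. fst p \<in> {1, 2} \<and> snd p \<in> T \<and> w = vscale3 (fst p) (snd p)"
begin

sublocale reps: proj_reps n "Dzero n (fF n1 n2 u v)" T
  using T_sub T_rep by (rule proj_reps_Dzero)

abbreviation J :: "(nat + (nat \<Rightarrow> int)) set" where
  "J \<equiv> colset n T"

abbreviation C :: "(nat + (nat \<Rightarrow> int) \<Rightarrow> int) set" where
  "C \<equiv> gen_code n J (Gprime n1 n)"

lemma n1_less_n: "n1 < n"
  using n2 n_def by simp

lemma col_F3vec: "j \<in> J \<Longrightarrow> col n1 j \<in> F3vec n"
  using n1 reps.reps_F3vec by (auto simp: colset_def col_def alphavec_F3vec)

lemma col_nonzero:
  assumes "j \<in> J"
  shows "col n1 j \<noteq> (\<lambda>_. 0)"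
proof (cases j)
  case (Inl a)
  then show ?thesis
    using alphavec_self[OF n1, of a] by (auto simp: col_def dest: fun_cong[of _ _ a])
next
  case (Inr x)
  then show ?thesis using assms T_sub by (auto simp: colset_def col_def)
qed

lemma reps_not_proportional_alphavec:
  assumes "x \<in> T" "b < n" "a \<in> {1, 2}"
  shows "x \<noteq> vscale3 a (alphavec n1 b)"
proof
  assume "x = vscale3 a (alphavec n1 b)"
  then have "fF n1 n2 u v x = fF n1 n2 u v (alphavec n1 b)"
    using fF_vscale3[OF alphavec_F3vec[OF n1 assms(2)] assms(3)] by simp
  moreover have "fF n1 n2 u v x = 0" using assms(1) T_sub by (auto simp: Dzero_def)
  ultimately show False using fF_alphavec_nonzero[OF n1 n2 u v] by simp
qed

lemma col_not_proportional:
  assumes j: "j \<in> J" "j' \<in> J" "j \<noteq> j'" and a: "a \<in> {1, 2}"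
  shows "col n1 j \<noteq> vscale3 a (col n1 j')"
proof
  assume eq: "col n1 j = vscale3 a (col n1 j')"
  then have eq': "col n1 j' = vscale3 a (col n1 j)"
    using vscale3_vscale3[OF a col_F3vec[OF j(2)]] by simp
  show False
  proof (cases j; cases j')
    fix b b' assume "j = Inl b" "j' = Inl b'"
    then have "vscale3 a (alphavec n1 b') b \<noteq> 0" "vscale3 a (alphavec n1 b) b' \<noteq> 0"
      using fun_cong[OF eq, of b] fun_cong[OF eq', of b'] alphavec_self[OF n1]
      by (simp_all add: col_def)
    then have "alphavec n1 b' b \<noteq> 0" "alphavec n1 b b' \<noteq> 0"
      by (auto dest: vscale3_nonzeroD)
    then have "b = b' \<or> (b = 0 \<and> n1 \<le> b')" "b' = b \<or> (b' = 0 \<and> n1 \<le> b)"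
      by (auto dest: alphavec_nonzeroD)
    then show False
      using \<open>j = Inl b\<close> \<open>j' = Inl b'\<close> j(3) n1 by auto
  next
    fix b x assume "j = Inl b" "j' = Inr x"
    then show False
      using eq' j reps_not_proportional_alphavec[OF _ _ a] by (auto simp: colset_def col_def)
  next
    fix x b assume "j = Inr x" "j' = Inl b"
    then show False
      using eq j reps_not_proportional_alphavec[OF _ _ a] by (auto simp: colset_def col_def)
  next
    fix x x' assume "j = Inr x" "j' = Inr x'"
    then show False
      using eq j reps.reps_eq_if_proportional[OF _ _ a] by (auto simp: colset_def col_def)
  qed
qed

lemma dual_weight_ge3:
  assumes d: "d \<in> dual_code J C" and d0: "d \<noteq> (\<lambda>_. 0)"
  shows "3 \<le> wt J d"
proof (rule ccontr)
  let ?S = "{j \<in> J. d j \<noteq> 0}"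
  assume "\<not> 3 \<le> wt J d"
  then have "card ?S \<le> 2" by (simp add: wt_def)
  have finJ: "finite J" by (simp add: finite_colset reps.finite_reps)
  have dW: "d \<in> words3 J" using d by (simp add: dual_code_Gprime_iff[OF n1])
  then have dv: "d j \<in> {1, 2}" if "j \<in> ?S" for j using that by (auto simp: words3_def)
  have rel: "3 dvd (\<Sum>j\<in>?S. d j * col n1 j k)" if "k < n" for k
  proof -
    have "(\<Sum>j\<in>?S. d j * col n1 j k) = (\<Sum>j\<in>J. d j * col n1 j k)"
      using finJ by (intro sum.mono_neutral_left) auto
    then show ?thesis using d that by (simp add: dual_code_Gprime_iff[OF n1])
  qed
  consider "card ?S = 0" | "card ?S = 1" | "card ?S = 2"
    using \<open>card ?S \<le> 2\<close> by linarith
  then show False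
  proof cases
    case 1
    then have "?S = {}" using finJ by simp
    then show False using dW d0 by (auto simp: words3_def fun_eq_iff)
  next
    case 2
    then obtain j where S: "?S = {j}" by (rule card_1_singletonE)
    then have j: "j \<in> J" "d j \<in> {1, 2}" using dv by auto
    have "col n1 j = (\<lambda>_. 0)"
    proof (rule F3vec_eqI[OF col_F3vec[OF j(1)]])
      show "(\<lambda>_. 0) \<in> F3vec n" by (simp add: F3vec_def)
      fix k assume "k < n"
      then have "3 dvd d j * col n1 j k" using rel[of k] S by simp
      then have "3 dvd col n1 j k" by (rule dvd3_unit_mult[OF j(2)])
      then show "[col n1 j k = 0] (mod 3)" by (simp add: cong_0_iff)
    qed
    then show False using col_nonzero[OF j(1)] by simp
  next
    case 3
    then obtain j j' where S: "?S = {j, j'}" and jj': "j \<noteq> j'" by (meson card_2_iff)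
    then have j: "j \<in> J" "j' \<in> J" "d j \<in> {1, 2}" "d j' \<in> {1, 2}" using dv by auto
    let ?a = "(- (d j * d j')) mod 3"
    have a: "?a \<in> {1, 2}" using j(3,4) by auto
    have "col n1 j = vscale3 ?a (col n1 j')"
    proof (rule F3vec_eq_vscale3I[OF col_F3vec[OF j(1)] col_F3vec[OF j(2)]])
      fix k assume "k < n"
      then have "3 dvd d j * col n1 j k + d j' * col n1 j' k" using rel[of k] S jj' by simp
      then show "[col n1 j k = ?a * col n1 j' k] (mod 3)" by (rule cong_of_dvd3_relation[OF j(3,4)])
    qed
    then show False using col_not_proportional[OF j(1,2) jj' a] by simp
  qed
qed

text \<open>The witness is the relation 2 alpha_0 + alpha_n1 + 2a t = 0, where e_n1 = a t with t \<in> T.\<close>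

lemma dual_weight3_exists: "\<exists>d\<in>dual_code J C. d \<noteq> (\<lambda>_. 0) \<and> wt J d = 3"
proof -
  obtain a t where a: "a \<in> {1, 2}" and t: "t \<in> T" and et: "unitvec n1 = vscale3 a t"
    using reps.reps_exists[OF unitvec_Dzero[OF n1_less_n]] by blast
  have tval: "t = vscale3 a (unitvec n1)"
    using vscale3_vscale3[OF a reps.reps_F3vec[OF t]] et by simp
  have J0: "Inl 0 \<in> J" "Inl n1 \<in> J" "Inr t \<in> J" using n1_less_n t by (auto simp: colset_def)
  have dist: "Inl 0 \<noteq> (Inl n1 :: nat + (nat \<Rightarrow> int))" "Inl 0 \<noteq> Inr t" "Inl n1 \<noteq> Inr t"
    using n1 by auto
  define d where "d j = (if j = Inl 0 then 2 else if j = Inl n1 then 1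
      else if j = Inr t then (2 * a) mod 3 else (0::int))" for j
  have a2: "(2 * a) mod 3 \<in> {1, 2}" using a by auto
  have S: "{j \<in> J. d j \<noteq> 0} = {Inl 0, Inl n1, Inr t}"
    using J0 a2 dist by (auto simp: d_def)
  have "(\<Sum>j\<in>J. d j * col n1 j k) = (\<Sum>j\<in>{Inl 0, Inl n1, Inr t}. d j * col n1 j k)" for k
    using S by (intro sum.mono_neutral_right) (auto simp: finite_colset reps.finite_reps)
  also have "\<dots> k = 2 * alphavec n1 0 k + alphavec n1 n1 k + (2 * a) mod 3 * t k" for k
    using dist by (simp add: d_def col_def)
  also have "\<dots> k = (if k = 0 then 3 else if k = n1 then 1 + (2 * a) mod 3 * (a mod 3) else 0)" for k
    using n1 by (auto simp: tval alphavec_apply vscale3_def unitvec_def)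
  finally have "3 dvd (\<Sum>j\<in>J. d j * col n1 j k)" for k
    using a by auto
  moreover have "d \<in> words3 J" using J0 a2 by (auto simp: d_def words3_def)
  ultimately have "d \<in> dual_code J C" by (simp add: dual_code_Gprime_iff[OF n1])
  moreover have "wt J d = 3" using S dist by (simp add: wt_def)
  moreover have "d (Inl 0) \<noteq> 0" by (simp add: d_def)
  then have "d \<noteq> (\<lambda>_. 0)" by auto
  ultimately show ?thesis by blast
qed

lemma min_dist_dual_code: "min_dist J (dual_code J C) 3"
  unfolding min_dist_def using dual_weight3_exists dual_weight_ge3 by blast

end

context code_setting
begin

lemma sum_reps_coord_product_dvd3:
  assumes "4 \<le> n" "4 \<le> n1 + n2 + s \<or> n1 = 1" "k < n" "l < n"
  shows "(3::int) dvd (\<Sum>x\<in>T. x k * x l)"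
proof -
  have "3 dvd (\<Sum>w\<in>Dzero n (fF n1 n2 u v). w k * w l)"
    using sum_Dzero_coord_product_dvd3[OF n_def assms u v] .
  then have "3 dvd 2 * (\<Sum>x\<in>T. x k * x l)"
    using cong_dvd_iff[OF reps.sum_cone_cong] by blast
  then show ?thesis by (rule dvd3_unit_mult[rotated]) simp
qed

lemma card_reps_odd:
  assumes "odd n1"
  shows "(3 ^ (n - 1) - 1) div 2 = int (card T)"
proof -
  have "3 ^ (n - 1) = 2 * card T + 1"
    using card_Dzero_odd[OF n_def u assms] reps.card_cone by simp
  then have "(3::int) ^ (n - 1) = 2 * int (card T) + 1"
    using arg_cong[of _ _ int] by fastforce
  then show ?thesis by simp
qed

lemma card_reps_even:
  assumes "even n1" "is_type n s (fF n1 n2 u v) eps0"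
  shows "(3 ^ (n - 1) + 2 * eps0 * 3 ^ ((n + s) div 2 - 1) - 1) div 2 = int (card T)"
proof -
  have "(3::int) ^ n = 3 * 3 ^ (n - 1)" "(3::int) ^ ((n + s) div 2) = 3 * 3 ^ ((n + s) div 2 - 1)"
    using n_def n1 n2 by (simp_all flip: power_Suc)
  then have "2 * int (card T) = 3 ^ (n - 1) + 2 * eps0 * 3 ^ ((n + s) div 2 - 1) - 1"
    using card_Dzero_even[OF n_def u assms] reps.card_cone by (simp; linarith)
  then show ?thesis
    by (simp flip: \<open>2 * int (card T) = _\<close>)
qed

lemma code_parameters:
  assumes "4 \<le> n" "4 \<le> n1 + n2 + s \<or> n1 = 1" and K': "K' = int (card T)"
  shows "let J = colset n T; C = gen_code n J (Gprime n1 n)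
    in code_NK J C (K' + int n) (int n) \<and> is_LCD J C \<and>
       code_NK J (dual_code J C) (K' + int n) K' \<and>
       min_dist J (dual_code J C) 3 \<and> is_LCD J (dual_code J C)"
proof -
  have finJ: "finite J" by (simp add: finite_colset reps.finite_reps)
  interpret gram_code n J "Gprime n1 n"
    using finJ
      gram_Gprime_nonsingular[OF reps.finite_reps n1 sum_reps_coord_product_dvd3[OF assms(1,2)]]
    by unfold_locales
  have "card J = n + card T" by (simp add: card_colset reps.finite_reps)
  then have "card (dual_code J C) = 3 ^ card T" using card_dual_code by simp
  then show ?thesis
    using card_gen_code gen_code_LCD dual_code_LCD min_dist_dual_code finJ \<open>card J = n + card T\<close>
    unfolding code_NK_def Let_def K' by simp
qed

end

theorem theorem11:
  fixes n1 n2 s n :: nat and u v :: "nat \<Rightarrow> int" and eps0 :: int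
    and T :: "(nat \<Rightarrow> int) set"
  assumes n1: "n1 \<ge> 1" and n2: "n2 \<ge> 1" and n_def: "n = n1 + 2 * n2 + s"
    and u: "\<forall>i<n1. u i \<in> {1, 2}" and v: "\<forall>i<n1. v i \<in> {1, 2}"
    and eps0: "is_type n s (fF n1 n2 u v) eps0"
    and T_sub: "T \<subseteq> Dzero n (fF n1 n2 u v) - {\<lambda>_. 0}"
    and T_rep: "\<forall>w \<in> Dzero n (fF n1 n2 u v) - {\<lambda>_. 0}.
                  \<exists>!p. fst p \<in> {1, 2} \<and> snd p \<in> T \<and> w = vscale3 (fst p) (snd p)"
  shows
    "(even (n + s) \<and> s + 4 \<le> n \<and> n + s \<ge> 6 \<longrightarrow>
       (let K' = (3 ^ (n - 1) + 2 * eps0 * 3 ^ ((n + s) div 2 - 1) - 1) div 2;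
            J = colset n T; C = gen_code n J (Gprime n1 n)
        in code_NK J C (K' + int n) (int n) \<and> is_LCD J C \<and>
           code_NK J (dual_code J C) (K' + int n) K' \<and>
           min_dist J (dual_code J C) 3 \<and> is_LCD J (dual_code J C)))
   \<and> (odd (n + s) \<and> s + 3 \<le> n \<and> n + s \<ge> 5 \<longrightarrow>
       (let K' = (3 ^ (n - 1) - 1) div 2;
            J = colset n T; C = gen_code n J (Gprime n1 n)
        in code_NK J C (K' + int n) (int n) \<and> is_LCD J C \<and>
           code_NK J (dual_code J C) (K' + int n) K' \<and>
           min_dist J (dual_code J C) 3 \<and> is_LCD J (dual_code J C)))"
proof -
  interpret code_setting n1 n2 s n u v T
    using n1 n2 n_def u v T_sub T_rep by unfold_locales
  have "even n1 \<and> 4 \<le> n \<and> 4 \<le> n1 + n2 + s" if "even (n + s)" "s + 4 \<le> n" "n + s \<ge> 6"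
    using that n_def n1 n2 by (auto elim: oddE)
  moreover have "odd n1 \<and> 4 \<le> n \<and> (4 \<le> n1 + n2 + s \<or> n1 = 1)"
    if "odd (n + s)" "s + 3 \<le> n" "n + s \<ge> 5"
    using that n_def n2 by (auto elim: oddE)
  ultimately show ?thesis
    using code_parameters[OF _ _ card_reps_even[OF _ eps0]] code_parameters[OF _ _ card_reps_odd]
    unfolding Let_def by blast
qed

end
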